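(* Let $k\ge2$ be an integer and $q=2^{-k}$. There is an optimal prefix code for $\mathrm{TDGD}(q)$ in which, for each signature $s\ge0$, the $s+1$ pairs $(i,j)$ with $i+j=s$ receive codewords of lengths $\Lambda_s$ or $\Lambda_s+1$ with the following counts. Case 1, $0\le s\le 2^{k-1}-2$: write $s=2^i+j-1$ with $0\le i\le k-2$, $0\le j\le 2^i-1$; then $\Lambda_s=(s+2)(i+1)-2^{i+1}$, with $2^i-j-1$ codewords of length $\Lambda_s$ and $2j+1$ of length $\Lambda_s+1$. Case 2, $s\ge 2^{k-1}-1$: write $s=2^{k-1}-1+(2^k-1)\ell+j$ with $\ell\ge0$, $0\le j\le 2^k-2$; then $\Lambda_s=(s+2)k-2^k$, and the numbers of codewords of lengths $\Lambda_s$ and $\Lambda_s+1$ are respectively: (a) if $0\le j\le 2^{k-1}-3$: $(2^k-1)\ell+2^{k-1}-j-1$ and $2j+1$; (b) if $j=2^{k-1}-2$: $(2^k-1)\ell$ and $2^k-2$; (c) if $2^{k-1}-1\le j\le 2^k-4$: $(2^k-1)\ell+3\cdot2^{k-1}-2-j$ and $2j+2-2^k$; (d) if $j=2^k-3$: $(2^k-1)\ell+2^{k-1}+1$ and $2^k-4$; (e) if $j=2^k-2$: $(2^k-1)\ell+2^{k-1}-1$ and $2^k-1$.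
   Context: $\mathrm{TDGD}(q)$ is the distribution $P(i,j)=(1-q)^2q^{i+j}$ on $\mathcal{A}=\{(i,j):i,j\in\mathbb{Z}_{\ge0}\}$; the signature of $(i,j)$ is $i+j$. A prefix code for $\mathcal{A}$ is optimal if it minimizes expected codeword length among all binary prefix codes for $\mathcal{A}$; which pair of a given signature receives which of the listed lengths is immaterial. *)

theory Defs
  imports "HOL-Analysis.Analysis" "HOL-Library.Sublist"
begin

definition TDGD :: "real \<Rightarrow> nat \<times> nat \<Rightarrow> real" where
  "TDGD q x = (1 - q)^2 * q ^ (fst x + snd x)"

text \<open>Binary prefix code on the alphabet nat x nat: no codeword is a prefix of the
  codeword of a different symbol (this also forces injectivity).\<close>
definition prefix_code :: "(nat \<times> nat \<Rightarrow> bool list) \<Rightarrow> bool" where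
  "prefix_code c \<longleftrightarrow> (\<forall>x y. x \<noteq> y \<longrightarrow> \<not> prefix (c x) (c y))"

definition exp_len :: "(nat \<times> nat \<Rightarrow> real) \<Rightarrow> (nat \<times> nat \<Rightarrow> bool list) \<Rightarrow> ennreal" where
  "exp_len P c = (\<integral>\<^sup>+ x. ennreal (P x * real (length (c x))) \<partial>count_space UNIV)"

definition optimal_prefix_code :: "(nat \<times> nat \<Rightarrow> real) \<Rightarrow> (nat \<times> nat \<Rightarrow> bool list) \<Rightarrow> bool" where
  "optimal_prefix_code P c \<longleftrightarrow> prefix_code c \<and>
     (\<forall>c'. prefix_code c' \<longrightarrow> exp_len P c \<le> exp_len P c')"

definition cnt :: "(nat \<times> nat \<Rightarrow> bool list) \<Rightarrow> nat \<Rightarrow> nat \<Rightarrow> nat" where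
  "cnt c s L = card {(a, b). a + b = s \<and> length (c (a, b)) = L}"

end

theory Submission
  imports Defs "HOL-Library.Discrete_Functions"
begin

text \<open>
  The pairs are grouped by their signature s = i + j; all pairs of signature s have weight q^s.

  Kraft's inequality and its converse (the canonical code) are proved for
      countable alphabets; the Kraft sums of opt_len telescope, block by block, to exactly 1,
      so opt_len is realised by a prefix code.
  (2) Lower bound.  For the periodic tail s \<ge> s0 = 2^(k-1) - 1 the quantity q^s 2^(Lam s) is
      constant, so a single Lagrange multiplier certifies optimality pointwise.  The irregular
      head is handled by backward induction over s: a competitor is split into block s and its
      tail, the tail is rescaled to the budget left by opt_len, and the block is compared by a
      convexity (tangent-line) bound after rounding the tail mass to a dyadic value.
  (3) Counting.
\<close>

section \<open>Prefix codes and the Kraft inequality\<close>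

fun bits :: "nat \<Rightarrow> nat \<Rightarrow> bool list" where
  "bits 0 n = []"
| "bits (Suc L) n = bits L (n div 2) @ [odd n]"

lemma length_bits [simp]: "length (bits L n) = L"
  by (induction L arbitrary: n) auto

lemma bits_add: "bits (L + d) m = bits L (m div 2^d) @ bits d m"
proof (induction d arbitrary: m)
  case 0
  then show ?case by simp
next
  case (Suc d)
  have "bits (L + Suc d) m = bits (L + d) (m div 2) @ [odd m]" by simp
  also have "\<dots> = bits L (m div 2 div 2^d) @ bits d (m div 2) @ [odd m]" using Suc by simp
  also have "m div 2 div 2^d = m div 2^(Suc d)" by (simp add: div_mult2_eq)
  finally show ?case by simp
qed

lemma bits_inj: "n < 2^L \<Longrightarrow> n' < 2^L \<Longrightarrow> bits L n = bits L n' \<Longrightarrow> n = n'"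
proof (induction L arbitrary: n n')
  case 0
  then show ?case by simp
next
  case (Suc L)
  from Suc.prems(3) have high: "bits L (n div 2) = bits L (n' div 2)" and low: "odd n = odd n'"
    by auto
  have "n div 2 < 2^L" "n' div 2 < 2^L" using Suc.prems by auto
  with high have "n div 2 = n' div 2" using Suc.IH by blast
  moreover have "n mod 2 = n' mod 2" using low by (simp add: mod2_eq_if)
  ultimately show ?case by (metis div_mult_mod_eq)
qed

lemma prefix_bits:
  assumes "prefix (bits L n) (bits L' m)"
  shows "L \<le> L' \<and> bits L n = bits L (m div 2^(L' - L))"
proof -
  have le: "L \<le> L'" using prefix_length_le[OF assms] by simp
  then have "bits L' m = bits L (m div 2^(L' - L)) @ bits (L' - L) m"
    using bits_add[of L "L' - L" m] by simp
  with assms obtain zs where "bits L (m div 2^(L' - L)) @ bits (L' - L) m = bits L n @ zs"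
    by (auto simp: prefix_def)
  then have "bits L n = bits L (m div 2^(L' - L))"
    by (metis append_eq_append_conv length_bits)
  with le show ?thesis by simp
qed

lemma card_bool_lists: "card {v::bool list. length v = n} = 2^n"
  using card_lists_length_eq[of "UNIV :: bool set" n] by simp

lemma finite_bool_lists: "finite {v::bool list. length v = n}"
  using card_bool_lists[of n] by (metis card.infinite power_not_zero zero_neq_numeral)

lemma half_pow_scale: "a \<le> N \<Longrightarrow> (1/2::real)^a * 2^N = 2^(N - a)"
  by (simp add: power_diff power_one_over)

text \<open>Kraft's counting argument: the words of length M extending distinct codewords of a
  prefix code are pairwise distinct, so at most 2^M of them exist.\<close>
lemma kraft_counting:
  assumes pc: "prefix_code c" and fin: "finite F" and le: "\<And>x. x \<in> F \<Longrightarrow> length (c x) \<le> M"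
  shows "(\<Sum>x\<in>F. (2::nat)^(M - length (c x))) \<le> 2^M"
proof -
  define ext where "ext x = (\<lambda>v. c x @ v) ` {v::bool list. length v = M - length (c x)}" for x
  have card_ext: "card (ext x) = 2^(M - length (c x))" for x
    unfolding ext_def by (subst card_image) (auto simp: inj_on_def card_bool_lists)
  have fin_ext: "finite (ext x)" for x
    unfolding ext_def using finite_bool_lists by simp
  have disj: "ext x \<inter> ext y = {}" if "x \<noteq> y" for x y
  proof (rule ccontr)
    assume "ext x \<inter> ext y \<noteq> {}"
    then obtain u v where uv: "c x @ u = c y @ v" unfolding ext_def by auto
    have "prefix (c x) (c x @ u)" by simp
    moreover have "prefix (c y) (c x @ u)" unfolding uv by simp
    ultimately have "prefix (c x) (c y) \<or> prefix (c y) (c x)" by (rule prefix_same_cases)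
    with pc that show False unfolding prefix_code_def by metis
  qed
  have "(\<Sum>x\<in>F. card (ext x)) = card (\<Union>x\<in>F. ext x)"
    using card_UN_disjoint[OF fin, of ext] fin_ext disj by auto
  also have "\<dots> \<le> card {w::bool list. length w = M}"
    using le by (intro card_mono[OF finite_bool_lists]) (auto simp: ext_def)
  finally show ?thesis by (simp add: card_ext card_bool_lists)
qed

lemma kraft_finite:
  assumes pc: "prefix_code c" and fin: "finite F"
  shows "(\<Sum>x\<in>F. (1/2::real)^(length (c x))) \<le> 1"
proof -
  define M where "M = Max (insert 0 ((\<lambda>x. length (c x)) ` F))"
  have le: "x \<in> F \<Longrightarrow> length (c x) \<le> M" for x
    unfolding M_def using fin by (intro Max_ge) auto
  have "real (\<Sum>x\<in>F. (2::nat)^(M - length (c x))) \<le> real ((2::nat)^M)"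
    using kraft_counting[OF pc fin le] by (simp only: of_nat_le_iff)
  then have "(\<Sum>x\<in>F. (2::real)^(M - length (c x))) \<le> 2^M" by simp
  also have "(\<Sum>x\<in>F. (2::real)^(M - length (c x))) = 2^M * (\<Sum>x\<in>F. (1/2::real)^(length (c x)))"
    unfolding sum_distrib_left
  proof (rule sum.cong)
    fix x assume "x \<in> F"
    then show "(2::real)^(M - length (c x)) = 2^M * (1/2)^(length (c x))"
      using half_pow_scale[OF le] by (simp add: mult.commute)
  qed simp
  finally show ?thesis by simp
qed


text \<open>The canonical code for prescribed lengths l: order the symbols by length and then by an
  injective index e; the codeword of x is the (l x)-bit expansion of its offset, which is
  2^(l x) times the Kraft mass of all earlier symbols.\<close>
definition earlier :: "('a \<Rightarrow> nat) \<Rightarrow> ('a \<Rightarrow> nat) \<Rightarrow> 'a \<Rightarrow> 'a set" where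
  "earlier l e x = {y. l y < l x \<or> (l y = l x \<and> e y < e x)}"

definition code_offset :: "('a \<Rightarrow> nat) \<Rightarrow> ('a \<Rightarrow> nat) \<Rightarrow> 'a \<Rightarrow> nat" where
  "code_offset l e x = (\<Sum>y\<in>earlier l e x. 2^(l x - l y))"

lemma earlier_le: "y \<in> earlier l e x \<Longrightarrow> l y \<le> l x"
  by (auto simp: earlier_def)

lemma finite_earlier:
  assumes "\<And>L. finite {x. l x \<le> L}"
  shows "finite (earlier l e x)"
  by (rule finite_subset[OF _ assms[of "l x"]]) (auto simp: earlier_def)

text \<open>Offsets fit into l x bits precisely because of Kraft's inequality.\<close>
lemma code_offset_lt:
  assumes fin: "\<And>L. finite {x. l x \<le> L}"
    and kraft: "\<And>F. finite F \<Longrightarrow> (\<Sum>x\<in>F. (1/2::real)^(l x)) \<le> 1"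
  shows "code_offset l e x < 2^(l x)"
proof -
  have fin_x: "finite (earlier l e x)" and x_new: "x \<notin> earlier l e x"
    using finite_earlier[OF fin] by (auto simp: earlier_def)
  have off: "real (code_offset l e x) = 2^(l x) * (\<Sum>y\<in>earlier l e x. (1/2::real)^(l y))"
    unfolding code_offset_def of_nat_sum sum_distrib_left
  proof (rule sum.cong)
    fix y assume "y \<in> earlier l e x"
    then have "(1/2::real)^(l y) * 2^(l x) = 2^(l x - l y)" by (rule half_pow_scale[OF earlier_le])
    then show "real (2^(l x - l y)) = 2^(l x) * (1/2::real)^(l y)" by (simp add: mult.commute)
  qed simp
  have "(\<Sum>y\<in>insert x (earlier l e x). (1/2::real)^(l y)) \<le> 1"
    using kraft fin_x by simp
  then have "(\<Sum>y\<in>earlier l e x. (1/2::real)^(l y)) + (1/2)^(l x) \<le> 1"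
    using fin_x x_new by simp
  then have "2^(l x) * (\<Sum>y\<in>earlier l e x. (1/2::real)^(l y)) + 1 \<le> 2^(l x)"
    by (simp add: field_simps power_one_over)
  then have "real (code_offset l e x + 1) \<le> real (2^(l x))" using off by simp
  then show ?thesis by linarith
qed

lemma code_offset_gap:
  assumes fin: "\<And>L. finite {x. l x \<le> L}" and yx: "y \<in> earlier l e x"
  shows "2^(l x - l y) * (code_offset l e y + 1) \<le> code_offset l e x"
proof -
  have sub: "insert y (earlier l e y) \<subseteq> earlier l e x"
    using yx by (auto simp: earlier_def)
  have y_new: "y \<notin> earlier l e y" by (simp add: earlier_def)
  have "2^(l x - l y) * code_offset l e y = (\<Sum>z\<in>earlier l e y. (2::nat)^(l x - l z))"
    unfolding code_offset_def sum_distrib_left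
  proof (rule sum.cong)
    fix z assume "z \<in> earlier l e y"
    then have "l z \<le> l y" "l y \<le> l x" using earlier_le[OF yx] by (auto dest: earlier_le)
    then show "2^(l x - l y) * 2^(l y - l z) = (2::nat)^(l x - l z)"
      by (simp flip: power_add)
  qed simp
  moreover have "(\<Sum>z\<in>insert y (earlier l e y). (2::nat)^(l x - l z))
      = 2^(l x - l y) + (\<Sum>z\<in>earlier l e y. (2::nat)^(l x - l z))"
    using finite_earlier[OF fin, of e y] y_new by (rule sum.insert)
  ultimately have "2^(l x - l y) * (code_offset l e y + 1)
      = (\<Sum>z\<in>insert y (earlier l e y). (2::nat)^(l x - l z))"
    by (simp only: distrib_left mult_1_right add.commute)
  also have "\<dots> \<le> (\<Sum>z\<in>earlier l e x. (2::nat)^(l x - l z))"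
    by (rule sum_mono2[OF finite_earlier[OF fin, of e x] sub]) simp
  finally show ?thesis by (simp add: code_offset_def)
qed

lemma prefix_code_from_lengths:
  fixes l :: "nat \<times> nat \<Rightarrow> nat"
  assumes fin: "\<And>L. finite {x. l x \<le> L}"
    and kraft: "\<And>F. finite F \<Longrightarrow> (\<Sum>x\<in>F. (1/2::real)^(l x)) \<le> 1"
  shows "\<exists>c. prefix_code c \<and> (\<forall>x. length (c x) = l x)"
proof -
  let ?e = prod_encode
  let ?N = "code_offset l ?e"
  define c where "c x = bits (l x) (?N x)" for x
  have "\<not> prefix (c x) (c y)" if xy: "x \<noteq> y" for x y
  proof
    assume "prefix (c x) (c y)"
    from prefix_bits[OF this[unfolded c_def]] have le: "l x \<le> l y"
      and same: "bits (l x) (?N x) = bits (l x) (?N y div 2^(l y - l x))" by auto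
    have "?N y < 2^(l x) * 2^(l y - l x)"
      using code_offset_lt[OF fin kraft, of ?e y] le by (simp flip: power_add)
    then have "?N y div 2^(l y - l x) < 2^(l x)" by (simp add: div_less_iff_less_mult)
    from bits_inj[OF code_offset_lt[OF fin kraft] this same]
    have eq: "?N x = ?N y div 2^(l y - l x)" .
    have "?e x \<noteq> ?e y" using xy by (metis inj_prod_encode injD)
    then have "?e x < ?e y \<or> ?e y < ?e x" by linarith
    then have "x \<in> earlier l ?e y \<or> y \<in> earlier l ?e x" using le by (auto simp: earlier_def)
    then show False
    proof
      assume "x \<in> earlier l ?e y"
      then have "2^(l y - l x) * (?N x + 1) \<le> ?N y" by (rule code_offset_gap[OF fin])
      then have "?N x + 1 \<le> ?N y div 2^(l y - l x)"
        by (simp add: less_eq_div_iff_mult_less_eq mult.commute)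
      with eq show False by simp
    next
      assume yx: "y \<in> earlier l ?e x"
      have "l x = l y" using earlier_le[OF yx] le by simp
      with code_offset_gap[OF fin yx] eq show False by simp
    qed
  qed
  then have "prefix_code c" unfolding prefix_code_def by blast
  moreover have "\<forall>x. length (c x) = l x" by (simp add: c_def)
  ultimately show ?thesis by blast
qed

section \<open>Pairs grouped by signature\<close>

definition sig_set :: "nat \<Rightarrow> (nat \<times> nat) set" where
  "sig_set s = {x. fst x + snd x = s}"

definition sig_from :: "nat \<Rightarrow> (nat \<times> nat) set" where
  "sig_from s = {x. s \<le> fst x + snd x}"

lemma sig_set_eq: "sig_set s = (\<lambda>a. (a, s - a)) ` {..s}"
  unfolding sig_set_def by (auto simp: image_iff intro!: exI[where x="fst _"])

lemma inj_sig_set: "inj_on (\<lambda>a. (a, s - a)) A"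
  by (auto simp: inj_on_def)

lemma finite_sig_set [simp]: "finite (sig_set s)"
  unfolding sig_set_eq by simp

lemma sum_sig_set: "(\<Sum>x\<in>sig_set s. f x) = (\<Sum>a\<le>s. f (a, s - a))"
  unfolding sig_set_eq by (subst sum.reindex[OF inj_sig_set]) simp

lemma card_sig_set: "card (sig_set s) = Suc s"
  unfolding sig_set_eq by (subst card_image[OF inj_sig_set]) simp

lemma sig_from_0 [simp]: "sig_from 0 = UNIV"
  by (auto simp: sig_from_def)

lemma nn_integral_indicator_finite:
  fixes g :: "nat \<times> nat \<Rightarrow> ennreal"
  assumes "finite A"
  shows "(\<integral>\<^sup>+x. indicator A x * g x \<partial>count_space UNIV) = (\<Sum>x\<in>A. g x)"
proof -
  have "(\<integral>\<^sup>+x. indicator A x * g x \<partial>count_space UNIV) = (\<integral>\<^sup>+x. g x \<partial>count_space A)"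
    by (simp add: nn_integral_count_space_indicator mult.commute)
  also have "\<dots> = (\<Sum>x\<in>A. g x)"
    using assms by (rule nn_integral_count_space_finite)
  finally show ?thesis .
qed

lemma nn_integral_sig_from_split:
  fixes g :: "nat \<times> nat \<Rightarrow> ennreal"
  shows "(\<integral>\<^sup>+x. indicator (sig_from s) x * g x \<partial>count_space UNIV)
    = (\<Sum>x\<in>sig_set s. g x) + (\<integral>\<^sup>+x. indicator (sig_from (Suc s)) x * g x \<partial>count_space UNIV)"
proof -
  have "indicator (sig_from s) x = (indicator (sig_set s) x + indicator (sig_from (Suc s)) x :: ennreal)"
    for x unfolding sig_set_def sig_from_def by (auto simp: indicator_def)
  then have "(\<integral>\<^sup>+x. indicator (sig_from s) x * g x \<partial>count_space UNIV)
     = (\<integral>\<^sup>+x. indicator (sig_set s) x * g x + indicator (sig_from (Suc s)) x * g x \<partial>count_space UNIV)"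
    by (simp add: distrib_right)
  also have "\<dots> = (\<integral>\<^sup>+x. indicator (sig_set s) x * g x \<partial>count_space UNIV)
      + (\<integral>\<^sup>+x. indicator (sig_from (Suc s)) x * g x \<partial>count_space UNIV)"
    by (rule nn_integral_add) auto
  finally show ?thesis by (simp add: nn_integral_indicator_finite)
qed

lemma nn_integral_sig_from_point:
  fixes g :: "nat \<times> nat \<Rightarrow> ennreal"
  assumes "x \<in> sig_from s"
  shows "g x \<le> (\<integral>\<^sup>+y. indicator (sig_from s) y * g y \<partial>count_space UNIV)"
proof -
  have "g x = (\<integral>\<^sup>+y. indicator {x} y * g y \<partial>count_space UNIV)"
    by (subst nn_integral_indicator_finite) auto
  also have "\<dots> \<le> (\<integral>\<^sup>+y. indicator (sig_from s) y * g y \<partial>count_space UNIV)"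
    using assms by (intro nn_integral_mono) (auto simp: indicator_def)
  finally show ?thesis .
qed

lemma nn_integral_sig_from_blocks:
  fixes g :: "nat \<times> nat \<Rightarrow> ennreal"
  shows "(\<integral>\<^sup>+x. indicator (sig_from s) x * g x \<partial>count_space UNIV) = (\<Sum>t. \<Sum>x\<in>sig_set (s + t). g x)"
proof -
  have pointwise: "indicator (sig_from s) x * g x = (\<Sum>t. indicator (sig_set (s + t)) x * g x)" for x
  proof (cases "x \<in> sig_from s")
    case True
    define t0 where "t0 = fst x + snd x - s"
    have "(\<Sum>t. indicator (sig_set (s + t)) x * g x) = (\<Sum>t\<in>{t0}. indicator (sig_set (s + t)) x * g x)"
      by (rule suminf_finite)
        (use True in \<open>auto simp: t0_def sig_set_def sig_from_def indicator_def\<close>)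
    also have "\<dots> = g x" using True by (simp add: t0_def sig_set_def sig_from_def indicator_def)
    finally show ?thesis using True by simp
  next
    case False
    then have "indicator (sig_set (s + t)) x * g x = 0" for t
      by (auto simp: sig_set_def sig_from_def indicator_def)
    then have "(\<lambda>t. indicator (sig_set (s + t)) x * g x) = (\<lambda>t. 0)" by (rule ext)
    then show ?thesis using False by (simp add: indicator_def)
  qed
  have "(\<integral>\<^sup>+x. indicator (sig_from s) x * g x \<partial>count_space UNIV)
      = (\<integral>\<^sup>+x. (\<Sum>t. indicator (sig_set (s + t)) x * g x) \<partial>count_space UNIV)"
    by (simp only: pointwise)
  also have "\<dots> = (\<Sum>t. \<integral>\<^sup>+x. indicator (sig_set (s + t)) x * g x \<partial>count_space UNIV)"
    by (rule nn_integral_suminf) auto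
  finally show ?thesis by (simp add: nn_integral_indicator_finite)
qed

lemma kraft_nn_integral:
  assumes "prefix_code c"
  shows "(\<integral>\<^sup>+x. indicator (sig_from 0) x * ennreal ((1/2)^(length (c x))) \<partial>count_space UNIV) \<le> 1"
proof -
  define f where "f x = ((1/2::real)^(length (c x)))" for x
  have "(\<Sum>t. \<Sum>x\<in>sig_set t. ennreal (f x)) \<le> 1"
  proof (rule suminf_le_const)
    show "summable (\<lambda>t. \<Sum>x\<in>sig_set t. ennreal (f x))" by simp
    fix n
    have disj: "disjoint_family_on sig_set {..<n}"
      by (auto simp: disjoint_family_on_def sig_set_def)
    have "(\<Sum>t<n. \<Sum>x\<in>sig_set t. ennreal (f x)) = ennreal (\<Sum>x\<in>(\<Union>t<n. sig_set t). f x)"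
      using sum.UNION_disjoint_family[OF _ _ disj, of "\<lambda>x. ennreal (f x)"]
      by (simp add: sum_ennreal f_def)
    moreover have "(\<Sum>x\<in>(\<Union>t<n. sig_set t). f x) \<le> 1"
      unfolding f_def by (rule kraft_finite[OF assms]) simp
    ultimately show "(\<Sum>t<n. \<Sum>x\<in>sig_set t. ennreal (f x)) \<le> 1" by simp
  qed
  then show ?thesis unfolding nn_integral_sig_from_blocks f_def by simp
qed

lemma two_pow_ge: "real t + 1 \<le> (2::real)^t"
proof -
  have "t < 2^t" by (rule less_exp)
  then have "real t + 1 \<le> real ((2::nat)^t)" by linarith
  then show ?thesis by simp
qed

lemma half_pow_le_iff: "((1/2::real)^a \<le> (1/2)^b) = (b \<le> a)"
  by (rule power_decreasing_iff) simp_all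

lemma one_minus_half_pow_le: "1 - (1/2::real)^t \<le> real t / 2"
proof (cases "t \<le> 1")
  case True
  then show ?thesis by (cases t) auto
next
  case False
  have "1 - (1/2::real)^t \<le> 1" by simp
  also have "1 \<le> real t / 2" using False by simp
  finally show ?thesis .
qed

lemma pointwise_lagrangian:
  fixes p lam :: real and l n :: nat
  assumes p: "0 < p" and lo: "lam / 2 \<le> p * 2^l" and hi: "p * 2^l \<le> lam"
  shows "p * real l + lam * (1/2)^l \<le> p * real n + lam * (1/2)^n"
proof -
  define y where "y = (1/2::real)^l"
  have y0: "0 < y" by (simp add: y_def)
  have y2: "y * 2^l = 1" by (simp add: y_def power_one_over)
  have "0 < p * 2^l" using p by simp
  then have lam0: "0 \<le> lam" using hi by linarith
  have p_lo: "lam * y / 2 \<le> p"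
  proof -
    have "lam / 2 * y \<le> p * 2^l * y" using lo y0 by (intro mult_right_mono) auto
    then show ?thesis using y2 by (simp add: field_simps)
  qed
  have p_hi: "p \<le> lam * y"
  proof -
    have "p * 2^l * y \<le> lam * y" using hi y0 by (intro mult_right_mono) auto
    then show ?thesis using y2 by (simp add: field_simps)
  qed
  show ?thesis
  proof (cases "l \<le> n")
    case True
    then obtain t where n: "n = l + t" using le_Suc_ex by blast
    have hn: "(1/2::real)^n = y * (1/2)^t" by (simp add: n y_def power_add)
    have "lam * y * (1 - (1/2)^t) \<le> lam * y * (real t / 2)"
      using one_minus_half_pow_le[of t] lam0 y0 by (intro mult_left_mono) auto
    also have "\<dots> = (lam * y / 2) * real t" by simp
    also have "\<dots> \<le> p * real t" using p_lo by (intro mult_right_mono) auto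
    finally have "lam * y * (1 - (1/2)^t) \<le> p * real t" .
    then show ?thesis unfolding hn y_def[symmetric] by (simp add: n algebra_simps)
  next
    case False
    define t where "t = l - n"
    have l: "l = n + t" and t1: "1 \<le> t" using False by (simp_all add: t_def)
    have hn: "(1/2::real)^n = y * 2^t"
    proof -
      have "y = (1/2)^n * (1/2)^t" by (simp add: y_def l power_add)
      then show ?thesis by (simp add: power_one_over field_simps)
    qed
    have "p * real t \<le> lam * y * real t" using p_hi by (intro mult_right_mono) auto
    also have "\<dots> \<le> lam * y * (2^t - 1)"
      using two_pow_ge[of t] lam0 y0 by (intro mult_left_mono) auto
    finally have "p * real t \<le> lam * y * (2^t - 1)" .
    then show ?thesis unfolding hn y_def[symmetric] by (simp add: l algebra_simps)
  qed
qed

text \<open>Tangent-line bound for the convex function e \<mapsto> e + 2^(i+1) 2^-e, which attains its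
  minimum i+2 at e = i and e = i+1.\<close>
lemma tangent_bound: "real i + 2 \<le> real e + 2^(i+1) * (1/2::real)^e"
proof (cases "e \<le> i")
  case True
  define t where "t = i + 1 - e"
  have i: "i + 1 = e + t" using True by (simp add: t_def)
  then have "2^(i+1) * (1/2::real)^e = 2^t" by (simp add: power_add power_one_over)
  moreover have "real t + 1 \<le> 2^t" by (rule two_pow_ge)
  moreover have "real i + 1 = real e + real t" using arg_cong[OF i, of real] by simp
  ultimately show ?thesis by linarith
next
  case False
  then consider "e = i + 1" | "i + 2 \<le> e" by linarith
  then show ?thesis
  proof cases
    case 1
    then show ?thesis by (simp add: power_one_over)
  next
    case 2
    then have "real i + 2 \<le> real e" by simp
    moreover have "0 \<le> 2^(i+1) * (1/2::real)^e" by simp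
    ultimately show ?thesis by linarith
  qed
qed

text \<open>Summing the tangent bound over a block with the Kraft constraint
  \<Sum> 2^-e + 2^-f \<le> 1, where 2^-f is the mass reserved for everything else.\<close>
lemma block_tangent_sum:
  fixes A :: "'a set" and e :: "'a \<Rightarrow> nat"
  assumes fin: "finite A" and kr: "(\<Sum>x\<in>A. (1/2::real)^(e x)) + (1/2)^f \<le> 1"
  shows "real (card A) * (real i + 2) - 2^(i+1) + 2^(i+1) * (1/2)^f \<le> real (\<Sum>x\<in>A. e x)"
proof -
  have "real (card A) * (real i + 2) = (\<Sum>x\<in>A. real i + 2)" by simp
  also have "\<dots> \<le> (\<Sum>x\<in>A. real (e x) + 2^(i+1) * (1/2::real)^(e x))"
    by (rule sum_mono) (rule tangent_bound)
  also have "\<dots> = real (\<Sum>x\<in>A. e x) + 2^(i+1) * (\<Sum>x\<in>A. (1/2::real)^(e x))"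
    by (simp add: sum.distrib sum_distrib_left)
  also have "\<dots> \<le> real (\<Sum>x\<in>A. e x) + 2^(i+1) * (1 - (1/2)^f)"
    using kr by (intro add_left_mono mult_left_mono) auto
  finally show ?thesis by (simp add: algebra_simps)
qed

text \<open>The
  bound is attained by giving 2^i - j - 1 symbols length i, the others length i+1, and f = i+1.\<close>
lemma block_lower_bound:
  fixes A :: "'a set" and e :: "'a \<Rightarrow> nat" and w W :: real
  assumes fin: "finite A" and cardA: "card A = 2^i + j"
    and kr: "(\<Sum>x\<in>A. (1/2::real)^(e x)) + (1/2)^f \<le> 1"
    and W0: "0 \<le> W" and Ww: "W \<le> w"
  shows "w * (real (card A) * (real i + 2) - 2^(i+1) + 1) + W * (real i + 1)
       \<le> w * real (\<Sum>x\<in>A. e x) + W * real f"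
proof -
  define n where "n = card A"
  have w0: "0 \<le> w" using W0 Ww by simp
  have base: "real n * (real i + 2) - 2^(i+1) + 2^(i+1) * (1/2)^f \<le> real (\<Sum>x\<in>A. e x)"
    unfolding n_def by (rule block_tangent_sum[OF fin kr])
  show ?thesis
  proof (cases "f \<le> i + 1")
    case True
    then obtain t where it: "i + 1 = f + t" using le_Suc_ex by blast
    then have pt: "2^(i+1) * (1/2::real)^f = 2^t" by (simp add: power_add power_one_over)
    have tt: "real t \<le> 2^t - 1" using two_pow_ge[of t] by simp
    have "W * real t \<le> w * real t" using Ww by (intro mult_right_mono) auto
    also have "\<dots> \<le> w * (2^t - 1)" using tt w0 by (intro mult_left_mono) auto
    finally have "W * real t \<le> w * (2^t - 1)" .
    moreover have "real i + 1 = real f + real t" using arg_cong[OF it, of real] by simp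
    moreover have "w * (real n * (real i + 2) - 2^(i+1) + 2^t) \<le> w * real (\<Sum>x\<in>A. e x)"
      using base pt w0 by (intro mult_left_mono) auto
    ultimately show ?thesis unfolding n_def[symmetric] by (simp add: algebra_simps)
  next
    case False
    text \<open>The block sum is an integer exceeding the integer n(i+2) - 2^(i+1).\<close>
    have nge: "2^(i+1) \<le> n * (i + 2)"
    proof -
      have "2^(i+1) \<le> 2^i * (i + 2)" by simp
      also have "\<dots> \<le> n * (i + 2)" using cardA by (intro mult_le_mono1) (simp add: n_def)
      finally show ?thesis .
    qed
    have pos: "0 < 2^(i+1) * (1/2::real)^f" by simp
    have r: "real (n * (i + 2) - 2^(i+1)) = real n * (real i + 2) - 2^(i+1)"
      using nge by (simp add: of_nat_diff algebra_simps)
    have "real (n * (i + 2) - 2^(i+1)) < real (\<Sum>x\<in>A. e x)"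
      using base pos r by linarith
    then have "real (n * (i + 2) - 2^(i+1) + 1) \<le> real (\<Sum>x\<in>A. e x)"
      by (simp only: of_nat_less_iff of_nat_le_iff)
    then have "real n * (real i + 2) - 2^(i+1) + 1 \<le> real (\<Sum>x\<in>A. e x)"
      using r by simp
    then have "w * (real n * (real i + 2) - 2^(i+1) + 1) \<le> w * real (\<Sum>x\<in>A. e x)"
      using w0 by (intro mult_left_mono) auto
    moreover have "W * (real i + 1) \<le> W * real f" using False W0 by (intro mult_left_mono) auto
    ultimately show ?thesis unfolding n_def by simp
  qed
qed


lemma dyadic_gap:
  fixes A :: "'a set" and l :: "'a \<Rightarrow> nat"
  assumes fin: "finite A" and lN: "\<And>x. x \<in> A \<Longrightarrow> l x \<le> N" and aN: "a \<le> N" and DN: "D \<le> N"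
    and lt: "(\<Sum>x\<in>A. (1/2::real)^(l x)) + (1/2)^a < (1/2)^D"
  shows "(\<Sum>x\<in>A. (1/2::real)^(l x)) + (1/2)^a + (1/2)^N \<le> (1/2)^D"
proof -
  define S where "S = (\<Sum>x\<in>A. (1/2::real)^(l x))"
  define Z where "Z = (\<Sum>x\<in>A. (2::nat)^(N - l x))"
  have SZ: "S * 2^N = real Z"
    unfolding S_def Z_def sum_distrib_right of_nat_sum
    by (rule sum.cong) (simp_all add: lN half_pow_scale)
  have "S * 2^N + (1/2)^a * 2^N < (1/2)^D * 2^N"
    using lt by (simp add: S_def flip: distrib_right)
  then have "real (Z + 2^(N - a)) < real ((2::nat)^(N - D))"
    using SZ half_pow_scale[OF aN] half_pow_scale[OF DN] by simp
  then have "real (Z + 2^(N - a) + 1) \<le> real ((2::nat)^(N - D))"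
    by (simp only: of_nat_less_iff of_nat_le_iff)
  then have "(S + (1/2)^a + (1/2)^N) * 2^N \<le> (1/2::real)^D * 2^N"
    using SZ half_pow_scale[OF aN] half_pow_scale[OF DN] by (simp add: distrib_right power_one_over)
  then show ?thesis by (simp add: S_def)
qed

lemma shorten_one:
  fixes A :: "'a set" and l :: "'a \<Rightarrow> nat"
  assumes fin: "finite A" and x0: "x0 \<in> A" and pos: "1 \<le> l x0"
  defines "l' \<equiv> l(x0 := l x0 - 1)"
  shows "(\<Sum>x\<in>A. (1/2::real)^(l' x)) = (\<Sum>x\<in>A. (1/2::real)^(l x)) + (1/2)^(l x0)"
    and "(\<Sum>x\<in>A. l' x) + 1 = (\<Sum>x\<in>A. l x)"
proof -
  have same: "(\<Sum>x\<in>A - {x0}. f (l' x)) = (\<Sum>x\<in>A - {x0}. f (l x))" for f :: "nat \<Rightarrow> 'b::comm_monoid_add"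
    by (rule sum.cong) (auto simp: l'_def)
  obtain n where n: "l x0 = Suc n" using pos by (cases "l x0") auto
  have double: "(1/2::real)^(l x0 - 1) = (1/2)^(l x0) + (1/2)^(l x0)"
    unfolding n by simp
  show "(\<Sum>x\<in>A. (1/2::real)^(l' x)) = (\<Sum>x\<in>A. (1/2::real)^(l x)) + (1/2)^(l x0)"
    using sum.remove[OF fin x0, of "\<lambda>x. (1/2::real)^(l' x)"] sum.remove[OF fin x0, of "\<lambda>x. (1/2::real)^(l x)"]
      same[of "\<lambda>n. (1/2::real)^n"] double by (simp add: l'_def)
  show "(\<Sum>x\<in>A. l' x) + 1 = (\<Sum>x\<in>A. l x)"
    using sum.remove[OF fin x0, of l'] sum.remove[OF fin x0, of l] same[of id] pos
    by (simp add: l'_def)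
qed

text \<open>Rounding the mass \<kappa> of the remainder up to the dyadic value 2^-m, for a nonempty block of
  weight w followed by a remainder of weight W \<le> w.  If that exceeds the budget 2^-D, the
  remainder is given length m+1 instead and a longest codeword of the block is shortened by
  one bit; in both cases the cost does not increase.\<close>
lemma round_tail_mass:
  fixes A :: "'a set" and l :: "'a \<Rightarrow> nat" and w W \<kappa> :: real
  assumes fin: "finite A" and ne: "A \<noteq> {}"
    and kl: "(1/2)^(Suc m) < \<kappa>" and ku: "\<kappa> \<le> (1/2)^m"
    and kr: "(\<Sum>x\<in>A. (1/2::real)^(l x)) + \<kappa> \<le> (1/2)^D"
    and W0: "0 \<le> W" and Ww: "W \<le> w"
  shows "\<exists>l2 m2. (\<Sum>x\<in>A. (1/2::real)^(l2 x)) + (1/2)^m2 \<le> (1/2)^D \<and>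
      w * real (\<Sum>x\<in>A. l2 x) + W * real m2 \<le> w * real (\<Sum>x\<in>A. l x) + W * real m"
proof (cases "(\<Sum>x\<in>A. (1/2::real)^(l x)) + (1/2)^m \<le> (1/2)^D")
  case True
  then show ?thesis by blast
next
  case False
  define S where "S = (\<Sum>x\<in>A. (1/2::real)^(l x))"
  define L where "L = Max (l ` A)"
  have "L \<in> l ` A" unfolding L_def using fin ne by (intro Max_in) auto
  then obtain x0 where x0: "x0 \<in> A" "l x0 = L" by auto
  have leL: "x \<in> A \<Longrightarrow> l x \<le> L" for x unfolding L_def using fin by (intro Max_ge) auto
  have lt: "S + (1/2)^(Suc m) < (1/2)^D" using kl kr by (simp add: S_def)
  have "(1/2::real)^(Suc m) < (1/2)^D"
    using lt sum_nonneg[of A "\<lambda>x. (1/2::real)^(l x)"] by (simp add: S_def)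
  moreover have "((1/2::real)^(Suc m) < (1/2)^D) = (D < Suc m)"
    by (rule power_strict_decreasing_iff) simp_all
  ultimately have Dm: "D \<le> m" by simp
  define N where "N = max L (Suc m)"
  have gap: "S + (1/2)^(Suc m) + (1/2)^N \<le> (1/2)^D"
  proof (unfold S_def, rule dyadic_gap[OF fin])
    show "l x \<le> N" if "x \<in> A" for x using leL[OF that] by (simp add: N_def)
  qed (use lt Dm in \<open>simp_all add: S_def N_def\<close>)
  have Lm: "Suc m \<le> L"
  proof (rule ccontr)
    assume "\<not> Suc m \<le> L"
    then have "N = Suc m" by (simp add: N_def)
    with gap have "S + (1/2)^m \<le> (1/2)^D" by simp
    with False show False by (simp add: S_def)
  qed
  then have newk: "S + (1/2)^L + (1/2::real)^(Suc m) \<le> (1/2)^D"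
    using gap by (simp add: N_def max_def)
  define l2 where "l2 = l(x0 := l x0 - 1)"
  have pos: "1 \<le> l x0" using Lm x0 by simp
  note short = shorten_one[where l=l, OF fin x0(1) pos, folded l2_def]
  have "(\<Sum>x\<in>A. (1/2::real)^(l2 x)) + (1/2)^(Suc m) \<le> (1/2)^D"
    using newk short(1) x0 by (simp add: S_def)
  moreover have "w * real (\<Sum>x\<in>A. l2 x) + W * real (Suc m) \<le> w * real (\<Sum>x\<in>A. l x) + W * real m"
  proof -
    have "real (\<Sum>x\<in>A. l x) = real (\<Sum>x\<in>A. l2 x) + 1"
      using short(2) by (metis of_nat_1 of_nat_add)
    then show ?thesis using Ww by (simp add: algebra_simps)
  qed
  ultimately show ?thesis by blast
qed

lemma kraft_rebase:
  fixes A :: "'a set" and l :: "'a \<Rightarrow> nat"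
  assumes fin: "finite A" and kr: "(\<Sum>x\<in>A. (1/2::real)^(l x)) + (1/2)^m \<le> (1/2)^D"
  shows "\<And>x. x \<in> A \<Longrightarrow> D \<le> l x" and "D \<le> m"
    and "(\<Sum>x\<in>A. (1/2::real)^(l x - D)) + (1/2)^(m - D) \<le> 1"
proof -
  have S0: "0 \<le> (\<Sum>x\<in>A. (1/2::real)^(l x))" by (rule sum_nonneg) simp
  show Dl: "D \<le> l x" if "x \<in> A" for x
  proof -
    have "(1/2::real)^(l x) \<le> (\<Sum>x\<in>A. (1/2::real)^(l x))"
      using fin that by (intro member_le_sum) auto
    moreover have "0 \<le> (1/2::real)^m" by simp
    ultimately have "(1/2::real)^(l x) \<le> (1/2)^D" using kr by linarith
    then show ?thesis by (simp add: half_pow_le_iff)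
  qed
  have "(1/2::real)^m \<le> (1/2)^D" using kr S0 by linarith
  then show Dm: "D \<le> m" by (simp add: half_pow_le_iff)
  have "(1/2::real)^D * (\<Sum>x\<in>A. (1/2::real)^(l x - D)) = (\<Sum>x\<in>A. (1/2::real)^(l x))"
    unfolding sum_distrib_left by (rule sum.cong) (simp_all add: Dl flip: power_add)
  moreover have "(1/2::real)^D * (1/2)^(m - D) = (1/2)^m" using Dm by (simp flip: power_add)
  ultimately have "(1/2::real)^D * ((\<Sum>x\<in>A. (1/2::real)^(l x - D)) + (1/2)^(m - D)) \<le> (1/2)^D * 1"
    using kr by (simp add: distrib_left)
  then show "(\<Sum>x\<in>A. (1/2::real)^(l x - D)) + (1/2)^(m - D) \<le> 1"
    by (subst (asm) mult_le_cancel_left_pos) simp_all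
qed

lemma dyadic_bracket:
  fixes \<kappa> :: real
  assumes "0 < \<kappa>" "\<kappa> \<le> 1"
  shows "\<exists>m. (1/2)^(Suc m) < \<kappa> \<and> \<kappa> \<le> (1/2)^m"
proof -
  obtain n where n: "(1/2::real)^n < \<kappa>" using real_arch_pow_inv[OF assms(1), of "1/2"] by auto
  define n0 where "n0 = (LEAST n. (1/2::real)^n < \<kappa>)"
  have n0: "(1/2::real)^n0 < \<kappa>" unfolding n0_def by (rule LeastI[of _ n]) (rule n)
  have "n0 \<noteq> 0"
  proof
    assume "n0 = 0"
    with n0 assms show False by simp
  qed
  then obtain m where m: "n0 = Suc m" by (cases n0) auto
  have "\<not> (1/2::real)^m < \<kappa>"
  proof
    assume "(1/2::real)^m < \<kappa>"
    then have "n0 \<le> m" unfolding n0_def by (rule Least_le)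
    with m show False by simp
  qed
  then show ?thesis using n0 m by auto
qed

lemma lin_le_pow: "a + t \<le> a * (2::nat)^t" if "1 \<le> a"
proof (induction t)
  case 0
  then show ?case by simp
next
  case (Suc t)
  have "a + Suc t \<le> a * 2^t + 1" using Suc by simp
  also have "\<dots> \<le> a * 2^t + a * 2^t" using that by simp
  finally show ?case by simp
qed

section \<open>The length profile of the optimal code\<close>

text \<open>Throughout, q = 2^-k with k \<ge> 2.  Signatures s < s0 = 2^(k-1) - 1 form the irregular
  head; from s0 on, the profile is periodic with period 2^k - 1.\<close>
locale tdgd =
  fixes k :: nat
  assumes k2: "2 \<le> k"
begin

definition H :: nat where "H = 2^(k-1)"
definition KK :: nat where "KK = 2^k"
definition s0 :: nat where "s0 = H - 1"

lemma KK_H: "KK = 2 * H"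
  unfolding KK_def H_def using k2 by (cases k) auto

lemma H2: "2 \<le> H"
proof -
  have "2^1 \<le> (2::nat)^(k-1)" using k2 by (intro power_increasing) auto
  then show ?thesis by (simp add: H_def)
qed

lemma H_eq: "H = 2 * 2^(k-2)"
proof -
  have "k - 1 = Suc (k - 2)" using k2 by simp
  then show ?thesis by (simp add: H_def)
qed

lemma KK4: "4 \<le> KK" using KK_H H2 by simp

text \<open>In the head, s = 2^i + j - 1 with i = lg s and 0 \<le> j < 2^i.\<close>
definition lg :: "nat \<Rightarrow> nat" where "lg s = floor_log (Suc s)"

lemma lg_le: "2^(lg s) \<le> Suc s"
  unfolding lg_def by (rule floor_log_exp2_le) simp

lemma lg_gt: "Suc s < 2 * 2^(lg s)"
  unfolding lg_def by (rule floor_log_exp2_gt)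

lemma lg_eqI: "2^i \<le> Suc s \<Longrightarrow> Suc s < 2 * 2^i \<Longrightarrow> lg s = i"
  unfolding lg_def by (rule floor_log_eqI) auto

text \<open>In the tail, s = s0 + (2^k - 1) l + j with 0 \<le> j \<le> 2^k - 2.\<close>
definition tail_l :: "nat \<Rightarrow> nat" where "tail_l s = (s - s0) div (KK - 1)"
definition tail_j :: "nat \<Rightarrow> nat" where "tail_j s = (s - s0) mod (KK - 1)"

lemma tail_decomp:
  assumes "s0 \<le> s"
  shows "s = s0 + (KK - 1) * tail_l s + tail_j s" "tail_j s < KK - 1"
  using assms KK4 unfolding tail_l_def tail_j_def by auto

lemma tail_decomp_unique:
  assumes "j < KK - 1"
  shows "tail_l (s0 + (KK - 1) * l + j) = l" "tail_j (s0 + (KK - 1) * l + j) = j"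
  using assms by (simp_all add: tail_l_def tail_j_def add.commute[of "(KK - 1) * l"])

text \<open>In the tail, the Kraft budget left for signatures \<ge> s is slack s \<cdot> 2^(k-1) \<cdot> 2^-Lam s;
  the factor slack s grows by one exactly after the signatures with slack_up.\<close>
definition slack :: "nat \<Rightarrow> nat" where
  "slack s = (if tail_j s + 1 < H then 2 * tail_l s + 1 else 2 * tail_l s + 2)"
definition slack_up :: "nat \<Rightarrow> bool" where
  "slack_up s \<longleftrightarrow> tail_j s + 2 = H \<or> tail_j s + 2 = KK"

text \<open>The base length Lam s of signature s, the number n_short s of pairs receiving it (the
  others get Lam s + 1), and the exponent of the Kraft budget left for signatures \<ge> s.\<close>
definition Lam :: "nat \<Rightarrow> nat" where
  "Lam s = (if s < s0 then (s + 2) * (lg s + 1) - 2 * 2^(lg s) else (s + 2) * k - KK)"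
definition n_short :: "nat \<Rightarrow> nat" where
  "n_short s = (if s < s0 then 2 * 2^(lg s) - s - 2
             else (KK - 1) * slack s - Suc s - (if slack_up s then 1 else 0))"
definition budget :: "nat \<Rightarrow> nat" where
  "budget s = (if s < s0 then Lam s - lg s else Lam s0 - (k - 1))"

definition opt_len :: "nat \<times> nat \<Rightarrow> nat" where
  "opt_len x = Lam (fst x + snd x) + (if fst x < n_short (fst x + snd x) then 0 else 1)"

lemma Lam_head: "s < s0 \<Longrightarrow> Lam s = (s + 2) * (lg s + 1) - 2 * 2^(lg s)"
  and Lam_tail: "\<not> s < s0 \<Longrightarrow> Lam s = (s + 2) * k - KK"
  and budget_head: "s < s0 \<Longrightarrow> budget s = Lam s - lg s"
  and budget_s0: "budget s0 = Lam s0 - (k - 1)"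
  and n_short_head: "s < s0 \<Longrightarrow> n_short s = 2 * 2^(lg s) - s - 2"
  and n_short_tail: "\<not> s < s0 \<Longrightarrow> n_short s = (KK - 1) * slack s - Suc s - (if slack_up s then 1 else 0)"
  by (simp_all add: Lam_def budget_def n_short_def)

text \<open>The base length of a head block exceeds 2^(i+1) + i, so Lam s - lg s is well defined.\<close>
lemma head_key:
  assumes "2^i \<le> Suc s"
  shows "2 * 2^i + i \<le> (s + 2) * (i + 1)"
proof (cases i)
  case 0
  then show ?thesis using assms by simp
next
  case (Suc i')
  have "2 * 2^i + i \<le> (2^i + 1) * (i + 1)" using Suc by (simp add: algebra_simps)
  also have "\<dots> \<le> (s + 2) * (i + 1)" using assms by (intro mult_le_mono1) simp
  finally show ?thesis .
qed

lemma head_facts: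
  assumes "s < s0"
  shows "n_short s \<le> Suc s" "Suc s - n_short s = 2 * (Suc s - 2^(lg s)) + 1"
    "Lam s = budget s + lg s"
proof -
  have P: "2^(lg s) \<le> Suc s" "Suc s < 2 * 2^(lg s)" by (rule lg_le, rule lg_gt)
  have A: "n_short s = 2 * 2^(lg s) - s - 2" using assms by (rule n_short_head)
  show "n_short s \<le> Suc s" using A P by linarith
  show "Suc s - n_short s = 2 * (Suc s - 2^(lg s)) + 1" using A P by linarith
  have "2 * 2^(lg s) + lg s \<le> (s + 2) * (lg s + 1)" by (rule head_key[OF lg_le])
  then show "Lam s = budget s + lg s"
    using Lam_head[OF assms] budget_head[OF assms] by linarith
qed

lemma budget_Suc_head:
  assumes "s < s0"
  shows "budget (Suc s) = budget s + lg s + 1"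
proof -
  define i where "i = lg s"
  define P where "P = (2::nat)^i"
  have P1: "P \<le> Suc s" "Suc s < 2 * P" using lg_le[of s] lg_gt[of s] by (simp_all add: P_def i_def)
  define X where "X = (s + 2) * (i + 1)"
  have key: "2 * P + i \<le> X" unfolding X_def P_def i_def by (rule head_key[OF lg_le])
  have L: "Lam s = X - 2 * P" unfolding X_def P_def i_def by (rule Lam_head[OF assms])
  have D: "budget s = Lam s - i" unfolding i_def by (rule budget_head[OF assms])
  consider (same) "Suc s < s0" "Suc (Suc s) < 2 * P" | (next_i) "Suc s < s0" "s + 2 = 2 * P"
    | (boundary) "Suc s = s0"
    using assms P1 by linarith
  then have "budget (Suc s) = budget s + i + 1"
  proof cases
    case same
    have lgeq: "lg (Suc s) = i" using P1 same by (intro lg_eqI) (simp_all add: P_def)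
    have "Lam (Suc s) = (Suc s + 2) * (i + 1) - 2 * P"
      using Lam_head[OF same(1)] unfolding lgeq P_def .
    moreover have "(Suc s + 2) * (i + 1) = X + (i + 1)" by (simp add: X_def algebra_simps)
    moreover have "budget (Suc s) = Lam (Suc s) - i"
      using budget_head[OF same(1)] unfolding lgeq .
    ultimately show ?thesis using L D key by linarith
  next
    case next_i
    have lgeq: "lg (Suc s) = i + 1" using next_i by (intro lg_eqI) (simp_all add: P_def)
    have "Lam (Suc s) = (Suc s + 2) * (i + 2) - 2 * (2 * P)"
      using Lam_head[OF next_i(1)] unfolding lgeq P_def by simp
    moreover have "budget (Suc s) = Lam (Suc s) - (i + 1)"
      using budget_head[OF next_i(1)] unfolding lgeq .
    moreover have "(Suc s + 2) * (i + 2) = 2 * (P * i) + 4 * P + i + 2" "X = 2 * (P * i) + 2 * P"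
      using next_i(2) by (simp_all add: X_def algebra_simps)
    ultimately show ?thesis using L D key by linarith
  next
    case boundary
    then have e: "s + 2 = H" using H2 by (simp add: s0_def)
    have "2^(k-2) \<le> Suc s" "Suc s < 2 * 2^(k-2)" using e H_eq by simp_all
    then have ik: "i = k - 2" unfolding i_def by (rule lg_eqI)
    have eP: "s + 2 = 2 * P" using e ik H_eq unfolding P_def by simp
    have k: "k = i + 2" using ik k2 by simp
    have "budget (Suc s) = Lam s0 - (k - 1)" using boundary budget_s0 by simp
    moreover have "Lam s0 = (s0 + 2) * k - KK" by (rule Lam_tail) simp
    moreover have "KK = 2 * (2 * P)" using KK_H e eP by simp
    moreover have "(s0 + 2) * k = 2 * (P * i) + 4 * P + i + 2" "X = 2 * (P * i) + 2 * P"
      using eP boundary k by (simp_all add: X_def algebra_simps)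
    ultimately show ?thesis using L D key k by linarith
  qed
  then show ?thesis by (simp add: i_def)
qed

lemma tail_Lam_ge:
  assumes "s0 \<le> s" shows "s + (k - 1) + KK \<le> (s + 2) * k"
proof -
  have sH: "H \<le> s + 1" using assms H2 by (simp add: s0_def)
  have a: "(s + 2) * k = s * (k - 1) + s + 2 * k" using k2 by (simp add: algebra_simps)
  have b: "(H - 1) * (k - 1) \<le> s * (k - 1)" using sH by (intro mult_le_mono1) simp
  show ?thesis
  proof (cases "k = 2")
    case True
    then have "H = 2" unfolding H_def by simp
    then show ?thesis using True sH KK_H by (simp add: algebra_simps)
  next
    case False
    then have "H * 2 \<le> H * (k - 1)" using k2 by (intro mult_le_mono2) simp
    moreover have "(H - 1) * (k - 1) + (k - 1) = H * (k - 1)" using H2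
      by (metis Suc_diff_1 add.commute less_le_trans mult_Suc numeral_2_eq_2 zero_less_Suc)
    ultimately show ?thesis using a b KK_H sH by linarith
  qed
qed

lemma tail_Lam:
  assumes "s0 \<le> s"
  shows "Lam (Suc s) = Lam s + k" "s + (k - 1) \<le> Lam s"
proof -
  have ge: "s + (k - 1) + KK \<le> (s + 2) * k" by (rule tail_Lam_ge[OF assms])
  have LT: "Lam s = (s + 2) * k - KK" using assms by (intro Lam_tail) simp
  have LT1: "Lam (Suc s) = (Suc s + 2) * k - KK" using assms by (intro Lam_tail) simp
  show "Lam (Suc s) = Lam s + k" using LT LT1 ge by (simp add: algebra_simps)
  show "s + (k - 1) \<le> Lam s" using LT ge by linarith
qed

lemma slack_Suc:
  assumes "s0 \<le> s"
  shows "slack (Suc s) = slack s + (if slack_up s then 1 else 0)"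
proof -
  define l where "l = tail_l s"
  define j where "j = tail_j s"
  have sd: "s = s0 + (KK - 1) * l + j" and jlt: "j < KK - 1"
    using tail_decomp[OF assms] by (simp_all add: l_def j_def)
  have slack_s: "slack s = (if j + 1 < H then 2 * l + 1 else 2 * l + 2)"
    by (simp add: slack_def l_def j_def)
  have up_s: "slack_up s \<longleftrightarrow> j + 2 = H \<or> j + 2 = KK" by (simp add: slack_up_def j_def)
  show ?thesis
  proof (cases "j + 1 < KK - 1")
    case True
    have "Suc s = s0 + (KK - 1) * l + (j + 1)" using sd by simp
    then have "slack (Suc s) = (if j + 2 < H then 2 * l + 1 else 2 * l + 2)"
      using tail_decomp_unique[OF True, of l] by (simp add: slack_def)
    then show ?thesis using slack_s up_s True KK_H by auto
  next
    case False
    then have jj: "j + 2 = KK" using jlt by simp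
    have "(KK - 1) * (l + 1) = (KK - 1) * l + (KK - 1)" by simp
    then have "Suc s = s0 + (KK - 1) * (l + 1) + 0" using sd jj KK4 by linarith
    then have "slack (Suc s) = 2 * l + 3"
      using tail_decomp_unique[of 0 "l + 1"] KK4 H2 by (simp add: slack_def)
    then show ?thesis using slack_s up_s jj KK_H by auto
  qed
qed

text \<open>Tail counting identity: Suc s + n_short s + slack (Suc s) = 2^k \<cdot> slack s, which is
  exactly the statement that block s uses up its share of the tail budget.\<close>
lemma tail_count:
  assumes "s0 \<le> s"
  shows "Suc s + n_short s + slack (Suc s) = KK * slack s" "n_short s \<le> Suc s" "slack s \<le> Suc s"
proof -
  define l where "l = tail_l s"
  define j where "j = tail_j s"
  define M where "M = (KK - 1) * l"
  define e where "e = (if slack_up s then 1 else 0::nat)"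
  have sd: "s = s0 + M + j" and jlt: "j < KK - 1"
    using tail_decomp[OF assms] by (simp_all add: l_def j_def M_def)
  have s0H: "s0 + 1 = H" using H2 by (simp add: s0_def)
  have slack_s: "slack s = (if j + 1 < H then 2 * l + 1 else 2 * l + 2)"
    by (simp add: slack_def l_def j_def)
  have up_s: "slack_up s \<longleftrightarrow> j + 2 = H \<or> j + 2 = KK" by (simp add: slack_up_def j_def)
  have "3 * l \<le> M" using KK4 unfolding M_def by (intro mult_le_mono1) simp
  then show "slack s \<le> Suc s" using slack_s sd H2 by auto
  have bounds: "Suc s + e \<le> (KK - 1) * slack s \<and> (KK - 1) * slack s \<le> 2 * Suc s + e"
  proof (cases "j + 1 < H")
    case True
    then have "slack s = 2 * l + 1" "slack_up s \<longleftrightarrow> j + 2 = H" using slack_s up_s KK_H by auto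
    moreover have "(KK - 1) * (2 * l + 1) = 2 * M + (KK - 1)" by (simp add: M_def algebra_simps)
    ultimately show ?thesis using sd s0H KK_H True by (auto simp: e_def)
  next
    case False
    then have "slack s = 2 * l + 2" "slack_up s \<longleftrightarrow> j + 2 = KK" using slack_s up_s KK_H by auto
    moreover have "(KK - 1) * (2 * l + 2) = 2 * M + 2 * (KK - 1)" by (simp add: M_def algebra_simps)
    ultimately show ?thesis using sd s0H KK_H False jlt by (auto simp: e_def)
  qed
  have A: "n_short s = (KK - 1) * slack s - Suc s - e"
    using assms by (simp add: n_short_tail e_def)
  show "n_short s \<le> Suc s" using A conjunct1[OF bounds] conjunct2[OF bounds] by arith
  have "KK * slack s = (KK - 1) * slack s + slack s" using KK4 by (simp add: algebra_simps)
  moreover have "slack (Suc s) = slack s + e" using slack_Suc[OF assms] by (simp add: e_def)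
  ultimately show "Suc s + n_short s + slack (Suc s) = KK * slack s"
    using A conjunct1[OF bounds] conjunct2[OF bounds] by arith
qed

lemma n_short_le: "n_short s \<le> Suc s"
  using head_facts(1)[of s] tail_count(2)[of s] by (cases "s < s0") auto

lemma slack_s0: "slack s0 = 1"
  using H2 by (simp add: slack_def tail_l_def tail_j_def)

lemma Lam_s0: "Lam s0 = budget s0 + (k - 1)"
  using tail_Lam(2)[of s0] budget_s0 by simp

end

context tdgd
begin

text \<open>TDGD(q) is (1-q)^2 times the weight wt; costs and Kraft sums are taken over the pairs of
  signature at least s, so that the optimisation can proceed signature by signature.\<close>
definition q :: real where "q = 1 / 2^k"
definition wt :: "nat \<times> nat \<Rightarrow> real" where "wt x = q ^ (fst x + snd x)"

definition tail_cost :: "nat \<Rightarrow> (nat \<times> nat \<Rightarrow> nat) \<Rightarrow> ennreal" where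
  "tail_cost s l = (\<integral>\<^sup>+x. indicator (sig_from s) x * ennreal (wt x * real (l x)) \<partial>count_space UNIV)"
definition tail_kraft :: "nat \<Rightarrow> (nat \<times> nat \<Rightarrow> nat) \<Rightarrow> ennreal" where
  "tail_kraft s l = (\<integral>\<^sup>+x. indicator (sig_from s) x * ennreal ((1/2) ^ (l x)) \<partial>count_space UNIV)"
definition tail_weight :: "nat \<Rightarrow> ennreal" where
  "tail_weight s = (\<integral>\<^sup>+x. indicator (sig_from s) x * ennreal (wt x) \<partial>count_space UNIV)"

lemma q_pos: "0 < q" by (simp add: q_def)
lemma wt_nonneg: "0 \<le> wt x" using q_pos by (simp add: wt_def)

lemma sig_set_wt: "x \<in> sig_set s \<Longrightarrow> wt x = q ^ s"
  by (simp add: wt_def sig_set_def)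

lemma tail_cost_split:
  "tail_cost s l = ennreal (\<Sum>x\<in>sig_set s. wt x * real (l x)) + tail_cost (Suc s) l"
  unfolding tail_cost_def by (subst nn_integral_sig_from_split) (simp add: wt_nonneg sum_ennreal)

lemma tail_kraft_split:
  "tail_kraft s l = ennreal (\<Sum>x\<in>sig_set s. (1/2::real) ^ (l x)) + tail_kraft (Suc s) l"
  unfolding tail_kraft_def by (subst nn_integral_sig_from_split) (simp add: sum_ennreal)

lemma sum_opt_len:
  fixes f :: "nat \<Rightarrow> real"
  shows "(\<Sum>x\<in>sig_set s. f (opt_len x))
    = real (n_short s) * f (Lam s) + real (Suc s - n_short s) * f (Suc (Lam s))"
proof -
  have "(\<Sum>x\<in>sig_set s. f (opt_len x)) = (\<Sum>a\<le>s. if a < n_short s then f (Lam s) else f (Suc (Lam s)))"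
    unfolding sum_sig_set by (rule sum.cong) (simp_all add: opt_len_def)
  also have "\<dots> = (\<Sum>a\<in>{..s} \<inter> {a. a < n_short s}. f (Lam s))
      + (\<Sum>a\<in>{..s} \<inter> - {a. a < n_short s}. f (Suc (Lam s)))"
    by (rule sum.If_cases) simp
  also have "{..s} \<inter> {a. a < n_short s} = {..<n_short s}" using n_short_le[of s] by auto
  also have "{..s} \<inter> - {a. a < n_short s} = {n_short s..s}" by auto
  finally show ?thesis by simp
qed

section \<open>The optimal lengths exhaust the Kraft budget\<close>

lemma kraft_block_head:
  assumes "s < s0"
  shows "(\<Sum>x\<in>sig_set s. (1/2::real) ^ (opt_len x)) = (1/2)^(budget s) - (1/2)^(budget (Suc s))"
proof -
  define D where "D = budget s"
  define i where "i = lg s"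
  define P where "P = (2::nat)^i"
  have P1: "P \<le> Suc s" "Suc s < 2 * P" using lg_le[of s] lg_gt[of s] by (simp_all add: P_def i_def)
  have hf: "n_short s = 2 * P - s - 2" "Lam s = D + i" "budget (Suc s) = D + i + 1"
    using n_short_head[OF assms] head_facts(3)[OF assms] budget_Suc_head[OF assms]
    by (simp_all add: D_def i_def P_def)
  have cnt: "2 * n_short s + (Suc s - n_short s) = 2 * P - 1" using hf P1 by linarith
  have "(\<Sum>x\<in>sig_set s. (1/2::real) ^ (opt_len x))
      = real (n_short s) * (1/2)^(D + i) + real (Suc s - n_short s) * (1/2)^(Suc (D + i))"
    using sum_opt_len[where f="\<lambda>n. (1/2::real)^n"] hf by simp
  also have "\<dots> = real (2 * n_short s + (Suc s - n_short s)) * (1/2)^(Suc (D + i))"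
    by (simp add: field_simps)
  also have "\<dots> = (2 * 2^i - 1) * (1/2)^(Suc (D + i))"
    unfolding cnt using P1 by (simp add: P_def of_nat_diff)
  also have "\<dots> = (1/2)^D - (1/2)^(D + i + 1)"
    by (simp add: left_diff_distrib power_add field_simps)
  finally show ?thesis by (simp add: hf D_def)
qed

definition tail_budget :: "nat \<Rightarrow> real" where
  "tail_budget s = real (slack s) * 2^(k-1) * (1/2)^(Lam s)"

text \<open>A tail block consumes the difference of consecutive tail budgets; this is the counting
  identity tail_count in disguise.\<close>
lemma kraft_block_tail:
  assumes "s0 \<le> s"
  shows "(\<Sum>x\<in>sig_set s. (1/2::real) ^ (opt_len x)) = tail_budget s - tail_budget (Suc s)"
proof -
  have LS: "Lam (Suc s) = Lam s + k" by (rule tail_Lam(1)[OF assms])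
  have cnt: "real (Suc s + n_short s) = real KK * real (slack s) - real (slack (Suc s))"
    using tail_count(1)[OF assms] by (metis add_diff_cancel_right' of_nat_add of_nat_mult)
  have k1: "k = Suc (k - 1)" using k2 by simp
  have a: "real KK * (1/2::real)^(Suc (Lam s)) = 2^(k-1) * (1/2)^(Lam s)"
    unfolding KK_def by (subst (1) k1) (simp add: field_simps)
  have b: "(1/2::real)^(Suc (Lam s)) = 2^(k-1) * (1/2)^(Lam (Suc s))"
    unfolding LS by (subst (2) k1) (simp add: power_add field_simps)
  have "(\<Sum>x\<in>sig_set s. (1/2::real) ^ (opt_len x))
      = real (n_short s) * (1/2)^(Lam s) + real (Suc s - n_short s) * (1/2)^(Suc (Lam s))"
    by (rule sum_opt_len)
  also have "\<dots> = real (Suc s + n_short s) * (1/2)^(Suc (Lam s))"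
    using n_short_le[of s] by (simp add: field_simps of_nat_diff)
  also have "\<dots> = real (slack s) * (real KK * (1/2)^(Suc (Lam s)))
      - real (slack (Suc s)) * (1/2)^(Suc (Lam s))"
    unfolding cnt by (simp add: algebra_simps)
  also have "\<dots> = real (slack s) * (2^(k-1) * (1/2)^(Lam s))
      - real (slack (Suc s)) * (2^(k-1) * (1/2)^(Lam (Suc s)))"
    by (subst a, subst b, rule refl)
  also have "\<dots> = tail_budget s - tail_budget (Suc s)"
    by (simp add: tail_budget_def mult.assoc)
  finally show ?thesis .
qed

lemma tail_budget_s0: "tail_budget s0 = (1/2)^(budget s0)"
  unfolding tail_budget_def slack_s0 Lam_s0 by (simp add: power_add field_simps)

lemma tail_budget_bound:
  assumes "s0 \<le> s"
  shows "tail_budget s \<le> real (Suc s) * (1/2)^s"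
proof -
  have lens: "slack s \<le> Suc s" "s + (k - 1) \<le> Lam s"
    using tail_count(3)[OF assms] tail_Lam(2)[OF assms] by simp_all
  have "(1/2::real)^(Lam s) = (1/2)^(Lam s - (k-1)) * (1/2)^(k-1)"
    using lens by (simp flip: power_add)
  then have "2^(k-1) * (1/2::real)^(Lam s) = (1/2)^(Lam s - (k - 1))"
    by (simp add: field_simps)
  also have "\<dots> \<le> (1/2)^s" using lens by (intro power_decreasing) auto
  finally have "2^(k-1) * (1/2::real)^(Lam s) \<le> (1/2)^s" .
  moreover have "real (slack s) \<le> real (Suc s)" using lens by simp
  ultimately show ?thesis unfolding tail_budget_def mult.assoc by (intro mult_mono) auto
qed

lemma tail_budget_lim: "(\<lambda>n. tail_budget (s0 + n)) \<longlonglongrightarrow> 0"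
proof (rule Lim_transform_bound)
  show "\<forall>\<^sub>F n in sequentially. norm (tail_budget (s0 + n))
      \<le> norm (real n * (1/2::real)^n + real (Suc s0) * (1/2)^n)"
  proof (rule always_eventually, rule allI)
    fix n
    have "tail_budget (s0 + n) \<le> real (Suc (s0 + n)) * (1/2)^(s0 + n)"
      by (rule tail_budget_bound) simp
    also have "\<dots> \<le> real (Suc (s0 + n)) * (1/2)^n" by (intro mult_left_mono power_decreasing) auto
    also have "\<dots> = real n * (1/2::real)^n + real (Suc s0) * (1/2)^n" by (simp add: algebra_simps)
    finally show "norm (tail_budget (s0 + n)) \<le> norm (real n * (1/2::real)^n + real (Suc s0) * (1/2)^n)"
      by (simp add: tail_budget_def)
  qed
  show "(\<lambda>n. real n * (1/2::real)^n + real (Suc s0) * (1/2)^n) \<longlonglongrightarrow> 0"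
    using tendsto_add[OF powser_times_n_limit_0[of "1/2::real"]
        tendsto_mult_right_zero[OF LIMSEQ_power_zero[of "1/2::real"]]]
    by simp
qed

text \<open>The tail blocks telescope to the whole budget.\<close>
lemma tail_kraft_opt_len_s0: "tail_kraft s0 opt_len = ennreal ((1/2)^(budget s0))"
proof -
  have tele: "(\<lambda>t. tail_budget (s0 + t) - tail_budget (Suc (s0 + t))) sums tail_budget s0"
    using telescope_sums'[OF tail_budget_lim] by simp
  have "tail_kraft s0 opt_len = (\<Sum>t. \<Sum>x\<in>sig_set (s0 + t). ennreal ((1/2) ^ (opt_len x)))"
    unfolding tail_kraft_def by (rule nn_integral_sig_from_blocks)
  also have "\<dots> = (\<Sum>t. ennreal (tail_budget (s0 + t) - tail_budget (Suc (s0 + t))))"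
    by (subst sum_ennreal) (simp_all add: kraft_block_tail)
  also have "\<dots> = ennreal (tail_budget s0)"
  proof (rule suminf_ennreal_eq)
    show "0 \<le> tail_budget (s0 + t) - tail_budget (Suc (s0 + t))" for t
      using kraft_block_tail[of "s0 + t"] sum_nonneg[of "sig_set (s0+t)" "\<lambda>x. (1/2::real)^(opt_len x)"]
      by simp
  qed (rule tele)
  finally show ?thesis by (simp add: tail_budget_s0)
qed

lemma tail_kraft_opt_len: "s \<le> s0 \<Longrightarrow> tail_kraft s opt_len = ennreal ((1/2)^(budget s))"
proof (induction "s0 - s" arbitrary: s)
  case 0
  then have "s = s0" by simp
  then show ?case by (simp add: tail_kraft_opt_len_s0)
next
  case (Suc d)
  then have ss: "s < s0" by simp
  have IH: "tail_kraft (Suc s) opt_len = ennreal ((1/2)^(budget (Suc s)))"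
    using Suc.hyps(1)[of "Suc s"] Suc.hyps(2) ss by simp
  have le: "(1/2::real)^(budget (Suc s)) \<le> (1/2)^(budget s)"
    using budget_Suc_head[OF ss] by (intro power_decreasing) auto
  have "tail_kraft s opt_len
      = ennreal ((1/2)^(budget s) - (1/2)^(budget (Suc s))) + ennreal ((1/2)^(budget (Suc s)))"
    unfolding tail_kraft_split[of s] IH kraft_block_head[OF ss] ..
  also have "\<dots> = ennreal ((1/2)^(budget s))"
    using le by (subst ennreal_plus[symmetric]) auto
  finally show ?case .
qed

lemma budget_0: "budget 0 = 0"
proof -
  have "lg 0 = 0" by (simp add: lg_def)
  moreover have "0 < s0" using H2 by (simp add: s0_def)
  ultimately show ?thesis by (simp add: budget_def Lam_def)
qed

text \<open>Budgets and base lengths dominate the signature, so opt_len has finite level sets.\<close>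
lemma budget_ge: "s \<le> s0 \<Longrightarrow> s \<le> budget s"
proof (induction s)
  case 0
  then show ?case by simp
next
  case (Suc s)
  then show ?case using budget_Suc_head[of s] by simp
qed

lemma opt_len_ge: "fst x + snd x \<le> opt_len x"
proof -
  have "s \<le> Lam s" for s
    using budget_ge[of s] head_facts(3)[of s] tail_Lam(2)[of s] by (cases "s < s0") auto
  from this[of "fst x + snd x"] show ?thesis by (simp add: opt_len_def)
qed

lemma opt_len_code: "\<exists>c. prefix_code c \<and> (\<forall>x. length (c x) = opt_len x)"
proof (rule prefix_code_from_lengths)
  fix L
  have "{x. opt_len x \<le> L} \<subseteq> {..L} \<times> {..L}"
  proof (rule subsetI)
    fix x assume "x \<in> {x. opt_len x \<le> L}"
    then have "fst x + snd x \<le> L" using opt_len_ge[of x] by simp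
    then show "x \<in> {..L} \<times> {..L}" by (cases x) auto
  qed
  then show "finite {x. opt_len x \<le> L}" by (rule finite_subset) simp
next
  fix F :: "(nat \<times> nat) set" assume F: "finite F"
  have "ennreal (\<Sum>x\<in>F. (1/2::real)^(opt_len x))
      = (\<integral>\<^sup>+x. indicator F x * ennreal ((1/2)^(opt_len x)) \<partial>count_space UNIV)"
    by (simp add: nn_integral_indicator_finite[OF F] sum_ennreal)
  also have "\<dots> \<le> tail_kraft 0 opt_len" unfolding tail_kraft_def
    by (intro nn_integral_mono) (auto simp: indicator_def)
  also have "\<dots> = 1" using tail_kraft_opt_len[of 0] budget_0 by simp
  finally show "(\<Sum>x\<in>F. (1/2::real)^(opt_len x)) \<le> 1" by (simp add: ennreal_le_1)
qed

end

section \<open>Lower bound: no prefix code is cheaper\<close>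

context tdgd
begin

lemma integrand_split:
  fixes S :: "(nat \<times> nat) set" and f g :: "nat \<times> nat \<Rightarrow> real" and c :: real
  assumes "\<And>x. 0 \<le> f x" "\<And>x. 0 \<le> g x" "0 \<le> c"
  shows "(\<integral>\<^sup>+x. indicator S x * ennreal (f x + c * g x) \<partial>count_space UNIV)
    = (\<integral>\<^sup>+x. indicator S x * ennreal (f x) \<partial>count_space UNIV)
      + ennreal c * (\<integral>\<^sup>+x. indicator S x * ennreal (g x) \<partial>count_space UNIV)"
proof -
  have "(\<integral>\<^sup>+x. indicator S x * ennreal (f x + c * g x) \<partial>count_space UNIV)
     = (\<integral>\<^sup>+x. indicator S x * ennreal (f x) + ennreal c * (indicator S x * ennreal (g x)) \<partial>count_space UNIV)"
    using assms by (intro nn_integral_cong) (simp add: ennreal_plus ennreal_mult distrib_left mult_ac)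
  also have "\<dots> = (\<integral>\<^sup>+x. indicator S x * ennreal (f x) \<partial>count_space UNIV)
      + (\<integral>\<^sup>+x. ennreal c * (indicator S x * ennreal (g x)) \<partial>count_space UNIV)"
    by (rule nn_integral_add) auto
  also have "(\<integral>\<^sup>+x. ennreal c * (indicator S x * ennreal (g x)) \<partial>count_space UNIV)
      = ennreal c * (\<integral>\<^sup>+x. indicator S x * ennreal (g x) \<partial>count_space UNIV)"
    by (rule nn_integral_cmult) auto
  finally show ?thesis .
qed

text \<open>In the tail, q^s 2^(Lam s) is a constant, so opt_len satisfies the condition of the
  pointwise Lagrangian bound with one multiplier for all tail signatures.\<close>
lemma tail_scaled_weight:
  assumes "s0 \<le> t"
  shows "q^t * 2^(Lam t) = 2^(2*k) / 2^KK"
proof -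
  have ge: "t + (k - 1) + KK \<le> (t + 2) * k" by (rule tail_Lam_ge[OF assms])
  have "Lam t = (t + 2) * k - KK" using assms by (intro Lam_tail) simp
  then have e: "Lam t + KK = k * t + 2 * k" using ge by (simp add: algebra_simps)
  have "(2::real)^(Lam t) * 2^KK = 2^(k * t) * 2^(2 * k)"
    by (simp only: e flip: power_add)
  moreover have "q^t = 1 / 2^(k * t)" by (simp add: q_def power_mult power_one_over)
  ultimately show ?thesis by (simp add: field_simps)
qed

text \<open>Optimality on the tail: among all lengths whose tail Kraft sum fits the budget of opt_len,
  opt_len has the least tail cost (Lagrangian relaxation with multiplier 2^(2k+1-2^k)).\<close>
lemma tail_optimal:
  assumes kr: "tail_kraft s0 l \<le> ennreal ((1/2)^(budget s0))"
  shows "tail_cost s0 opt_len \<le> tail_cost s0 l"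
proof -
  define C :: real where "C = 2^(2*k) / 2^KK"
  have C0: "0 < C" by (simp add: C_def)
  define lam :: real where "lam = 2 * C"
  have lam0: "0 \<le> lam" using C0 by (simp add: lam_def)
  have pointwise: "wt x * real (opt_len x) + lam * (1/2)^(opt_len x) \<le> wt x * real (l x) + lam * (1/2)^(l x)"
    if "x \<in> sig_from s0" for x
  proof -
    define t where "t = fst x + snd x"
    have t0: "s0 \<le> t" using that by (simp add: t_def sig_from_def)
    have sw: "q^t * 2^(Lam t) = C" unfolding C_def by (rule tail_scaled_weight[OF t0])
    have sw1: "q^t * 2^(Suc (Lam t)) = 2 * C" unfolding sw[symmetric] by (simp add: mult_ac)
    have "opt_len x = Lam t \<or> opt_len x = Suc (Lam t)" by (simp add: opt_len_def t_def)
    then have "q^t * 2^(opt_len x) = C \<or> q^t * 2^(opt_len x) = 2 * C"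
      using sw sw1 by auto
    then have "lam / 2 \<le> q^t * 2^(opt_len x) \<and> q^t * 2^(opt_len x) \<le> lam"
      using C0 by (auto simp: lam_def)
    moreover have "wt x = q^t" by (simp add: wt_def t_def)
    ultimately show ?thesis using q_pos by (auto intro: pointwise_lagrangian)
  qed
  define F where "F l' = (\<integral>\<^sup>+x. indicator (sig_from s0) x * ennreal (wt x * real (l' x) + lam * (1/2)^(l' x)) \<partial>count_space UNIV)" for l'
  have F_split: "F l' = tail_cost s0 l' + ennreal lam * tail_kraft s0 l'" for l'
    unfolding F_def tail_cost_def tail_kraft_def
    by (rule integrand_split) (use wt_nonneg lam0 in auto)
  have "F opt_len \<le> F l"
    unfolding F_def using pointwise
    by (intro nn_integral_mono) (auto simp: indicator_def intro: ennreal_leI)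
  then have "tail_cost s0 opt_len + ennreal lam * ennreal ((1/2)^(budget s0))
      \<le> tail_cost s0 l + ennreal lam * tail_kraft s0 l"
    unfolding F_split tail_kraft_opt_len_s0 .
  also have "\<dots> \<le> tail_cost s0 l + ennreal lam * ennreal ((1/2)^(budget s0))"
    using kr by (intro add_left_mono mult_left_mono) auto
  finally have "tail_cost s0 opt_len + ennreal (lam * (1/2)^(budget s0))
      \<le> tail_cost s0 l + ennreal (lam * (1/2)^(budget s0))"
    using lam0 by (simp add: ennreal_mult)
  then show ?thesis by (simp add: ennreal_add_left_cancel_le add.commute[of "tail_cost s0 _"])
qed

lemma two_q_lt_1: "2 * q < 1"
proof -
  have "(2::real)^2 \<le> 2^k" using k2 by (intro power_increasing) auto
  then show ?thesis by (simp add: q_def field_simps)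
qed

text \<open>The weight beyond signature s, bounded by a geometric series using s + 2 + t \<le> (s + 2) 2^t.\<close>
lemma tail_weight_geometric:
  "tail_weight (Suc s) \<le> ennreal (real (s + 2) * q^(Suc s) / (1 - 2 * q))"
proof -
  define c where "c = real (s + 2) * q^(Suc s)"
  have q0: "0 < q" by (rule q_pos)
  have q2: "2 * q < 1" by (rule two_q_lt_1)
  have block: "(\<Sum>x\<in>sig_set t. ennreal (wt x)) = ennreal (real (Suc t) * q^t)" for t
  proof -
    have "(\<Sum>x\<in>sig_set t. ennreal (wt x)) = ennreal (\<Sum>x\<in>sig_set t. wt x)"
      by (rule sum_ennreal) (rule wt_nonneg)
    also have "(\<Sum>x\<in>sig_set t. wt x) = (\<Sum>x\<in>sig_set t. q^t)"
      by (rule sum.cong) (simp_all add: sig_set_wt)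
    also have "\<dots> = real (Suc t) * q^t" by (simp add: card_sig_set)
    finally show ?thesis .
  qed
  have "tail_weight (Suc s) = (\<Sum>t. ennreal (real (Suc (Suc s + t)) * q^(Suc s + t)))"
    unfolding tail_weight_def by (subst nn_integral_sig_from_blocks) (simp add: block)
  also have "\<dots> \<le> (\<Sum>t. ennreal (c * (2 * q)^t))"
  proof (rule suminf_le)
    fix t
    have "s + 2 + t \<le> (s + 2) * 2^t" by (rule lin_le_pow) simp
    then have "real (s + 2 + t) \<le> real ((s + 2) * 2^t)" by (simp only: of_nat_le_iff)
    then have "real (Suc (Suc s + t)) \<le> real (s + 2) * 2^t" by (simp add: algebra_simps)
    then have "real (Suc (Suc s + t)) * q^(Suc s + t) \<le> real (s + 2) * 2^t * q^(Suc s + t)"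
      using q0 by (intro mult_right_mono) auto
    also have "\<dots> = c * (2 * q)^t" by (simp add: c_def power_add power_mult_distrib)
    finally show "ennreal (real (Suc (Suc s + t)) * q^(Suc s + t)) \<le> ennreal (c * (2 * q)^t)"
      by (rule ennreal_leI)
  qed auto
  also have "\<dots> = ennreal (\<Sum>t. c * (2 * q)^t)"
  proof (rule suminf_ennreal2)
    show "0 \<le> c * (2 * q)^t" for t using q0 by (simp add: c_def)
    show "summable (\<lambda>t. c * (2 * q)^t)"
      using q0 q2 by (intro summable_mult summable_geometric) simp
  qed
  also have "(\<Sum>t. c * (2 * q)^t) = c / (1 - 2 * q)"
    using q0 q2 by (subst suminf_mult) (simp_all add: suminf_geometric divide_inverse)
  finally show ?thesis by (simp add: c_def)
qed

text \<open>In the head the weight of all later signatures is at most that of one pair of the current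
  signature, since (s + 4) q \<le> 1 there.\<close>
lemma tail_weight_bound:
  assumes "s < s0"
  shows "tail_weight (Suc s) \<le> ennreal (q^s)"
proof -
  have q0: "0 < q" by (rule q_pos)
  have "real (s + 4) \<le> real KK" using assms H2 KK_H by (simp add: s0_def)
  then have "real (s + 4) * q \<le> real KK * q" using q0 by (intro mult_right_mono) auto
  moreover have "q * real KK = 1" by (simp add: q_def KK_def)
  ultimately have "real (s + 4) * q \<le> 1" by (simp add: mult.commute)
  then have "real (s + 2) * q \<le> 1 - 2 * q" by (simp add: algebra_simps)
  then have "real (s + 2) * q^(Suc s) \<le> (1 - 2 * q) * q^s"
    using q0 by (simp add: mult_right_mono mult.assoc[symmetric])
  then have "real (s + 2) * q^(Suc s) / (1 - 2 * q) \<le> q^s"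
    using two_q_lt_1 by (simp add: divide_le_eq mult.commute)
  then show ?thesis using tail_weight_geometric[of s] order.trans ennreal_leI by blast
qed

end

context tdgd
begin

lemma tail_shift:
  fixes l :: "nat \<times> nat \<Rightarrow> nat" and m d :: nat
  assumes lm: "\<And>x. x \<in> sig_from t \<Longrightarrow> m \<le> l x"
  shows "tail_kraft t (\<lambda>x. l x - m + d) = ennreal (2^m * (1/2)^d) * tail_kraft t l"
    and "tail_cost t (\<lambda>x. l x - m + d) + ennreal (real m) * tail_weight t
      = tail_cost t l + ennreal (real d) * tail_weight t"
proof -
  have "indicator (sig_from t) x * ennreal ((1/2::real)^((l x - m + d)))
      = ennreal (2^m * (1/2)^d) * (indicator (sig_from t) x * ennreal ((1/2)^(l x)))" for x
  proof (cases "x \<in> sig_from t")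
    case True
    have "(l x - m + d) + m = l x + d" using lm[OF True] by simp
    then have "(1/2::real)^((l x - m + d)) * (1/2)^m = (1/2)^(l x) * (1/2)^d" by (simp flip: power_add)
    then have "(1/2::real)^((l x - m + d)) = 2^m * (1/2)^d * (1/2)^(l x)"
      by (simp add: field_simps power_one_over)
    then show ?thesis using True by (simp add: ennreal_mult)
  qed simp
  then show "tail_kraft t (\<lambda>x. l x - m + d) = ennreal (2^m * (1/2)^d) * tail_kraft t l"
    unfolding tail_kraft_def by (simp add: nn_integral_cmult)
  have "indicator (sig_from t) x * ennreal (wt x * real ((l x - m + d)) + real m * wt x)
      = indicator (sig_from t) x * ennreal (wt x * real (l x) + real d * wt x)" for x
  proof (cases "x \<in> sig_from t")
    case True
    have "real ((l x - m + d)) + real m = real (l x) + real d" using lm[OF True] by simp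
    then have "wt x * (real ((l x - m + d)) + real m) = wt x * (real (l x) + real d)" by simp
    then have "wt x * real ((l x - m + d)) + real m * wt x = wt x * real (l x) + real d * wt x"
      by (simp add: distrib_left mult.commute)
    then show ?thesis by simp
  qed simp
  then have "(\<integral>\<^sup>+x. indicator (sig_from t) x * ennreal (wt x * real ((l x - m + d)) + real m * wt x) \<partial>count_space UNIV)
      = (\<integral>\<^sup>+x. indicator (sig_from t) x * ennreal (wt x * real (l x) + real d * wt x) \<partial>count_space UNIV)"
    by simp
  then show "tail_cost t (\<lambda>x. l x - m + d) + ennreal (real m) * tail_weight t
      = tail_cost t l + ennreal (real d) * tail_weight t"
    unfolding tail_cost_def tail_weight_def
    by (subst (asm) (1 2) integrand_split) (use wt_nonneg in auto)
qed

lemma tail_shift_budget: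
  fixes l :: "nat \<times> nat \<Rightarrow> nat" and m d :: nat
  assumes lm: "\<And>x. x \<in> sig_from t \<Longrightarrow> m \<le> l x"
    and \<kappa>: "tail_kraft t l = ennreal \<kappa>" and \<kappa>0: "0 \<le> \<kappa>" and \<kappa>m: "\<kappa> \<le> (1/2)^m"
  shows "tail_kraft t (\<lambda>x. l x - m + d) \<le> ennreal ((1/2)^d)"
proof -
  have "tail_kraft t (\<lambda>x. l x - m + d) = ennreal (2^m * (1/2)^d) * ennreal \<kappa>"
    using tail_shift(1)[OF lm] by (simp add: \<kappa>)
  also have "\<dots> = ennreal ((1/2)^d * (2^m * \<kappa>))"
    using \<kappa>0 by (simp add: ennreal_mult mult_ac)
  also have "\<dots> \<le> ennreal ((1/2)^d)"
  proof (rule ennreal_leI)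
    have "2^m * \<kappa> \<le> (2::real)^m * (1/2)^m" using \<kappa>m by (intro mult_left_mono) auto
    then have "2^m * \<kappa> \<le> 1" by (simp add: power_one_over)
    then show "(1/2)^d * (2^m * \<kappa>) \<le> (1/2::real)^d"
      using mult_left_mono[of "2^m * \<kappa>" 1 "(1/2::real)^d"] by simp
  qed
  finally show ?thesis .
qed

lemma tail_kraft_bracket:
  assumes kr: "tail_kraft s l \<le> ennreal ((1/2)^D)"
  obtains \<kappa> m where "tail_kraft (Suc s) l = ennreal \<kappa>" "(1/2)^(Suc m) < \<kappa>" "\<kappa> \<le> (1/2)^m"
    "(\<Sum>x\<in>sig_set s. (1/2::real)^(l x)) + \<kappa> \<le> (1/2)^D"
    "\<And>x. x \<in> sig_from (Suc s) \<Longrightarrow> m \<le> l x"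
proof -
  define S where "S = (\<Sum>x\<in>sig_set s. (1/2::real)^(l x))"
  have S0: "0 \<le> S" unfolding S_def by (rule sum_nonneg) simp
  have split: "tail_kraft s l = ennreal S + tail_kraft (Suc s) l"
    unfolding S_def by (rule tail_kraft_split)
  then have "tail_kraft (Suc s) l \<le> ennreal ((1/2)^D)"
    using kr by (metis add_increasing order.trans zero_le order_refl)
  then obtain \<kappa> where \<kappa>: "tail_kraft (Suc s) l = ennreal \<kappa>" "0 \<le> \<kappa>"
    by (metis ennreal_cases ennreal_neq_top neq_top_trans)
  have budget: "S + \<kappa> \<le> (1/2)^D"
    using kr S0 \<kappa> unfolding split by (simp flip: ennreal_plus)
  have point: "(1/2::real)^(l x) \<le> \<kappa>" if "x \<in> sig_from (Suc s)" for x
  proof -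
    have "ennreal ((1/2)^(l x)) \<le> tail_kraft (Suc s) l" unfolding tail_kraft_def
      by (rule nn_integral_sig_from_point[OF that, where g="\<lambda>x. ennreal ((1/2)^(l x))"])
    then show ?thesis using \<kappa> by (simp add: ennreal_le_iff)
  qed
  have "(1/2::real)^(l (Suc s, 0)) \<le> \<kappa>" by (rule point) (simp add: sig_from_def)
  moreover have "0 < (1/2::real)^(l (Suc s, 0))" by simp
  ultimately have "0 < \<kappa>" by linarith
  moreover have "\<kappa> \<le> 1" using budget S0 power_le_one[of "1/2::real" D] by linarith
  ultimately obtain m where m: "(1/2)^(Suc m) < \<kappa>" "\<kappa> \<le> (1/2)^m"
    using dyadic_bracket by blast
  have "m \<le> l x" if "x \<in> sig_from (Suc s)" for x
    using point[OF that] m(2) half_pow_le_iff[of "l x" m] by linarith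
  then show ?thesis using that \<kappa>(1) m budget unfolding S_def by blast
qed

lemma head_block_cost:
  assumes "s < s0"
  shows "(\<Sum>x\<in>sig_set s. wt x * real (opt_len x))
    = q^s * (real (Suc s) * real (budget s) + (real (Suc s) * (real (lg s) + 2) - 2^(lg s + 1) + 1))"
proof -
  have hf: "Lam s = budget s + lg s" "Suc s - n_short s = 2 * (Suc s - 2^(lg s)) + 1"
    using head_facts[OF assms] by simp_all
  have P: "2^(lg s) \<le> Suc s" by (rule lg_le)
  have "(\<Sum>x\<in>sig_set s. wt x * real (opt_len x)) = q^s * (\<Sum>x\<in>sig_set s. real (opt_len x))"
    by (simp add: sum_distrib_left sig_set_wt)
  also have "(\<Sum>x\<in>sig_set s. real (opt_len x))
      = real (n_short s) * real (Lam s) + real (Suc s - n_short s) * real (Suc (Lam s))"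
    by (rule sum_opt_len)
  also have "\<dots> = real (Suc s) * real (Lam s) + real (Suc s - n_short s)"
    using n_short_le[of s] by (simp add: of_nat_diff algebra_simps)
  also have "\<dots> = real (Suc s) * real (budget s) + (real (Suc s) * (real (lg s) + 2) - 2^(lg s + 1) + 1)"
    using hf P by (simp add: of_nat_diff algebra_simps)
  finally show ?thesis .
qed

lemma head_block_bound:
  assumes ss: "s < s0" and kl: "(1/2)^(Suc m) < \<kappa>" and ku: "\<kappa> \<le> (1/2)^m"
    and kr: "(\<Sum>x\<in>sig_set s. (1/2::real)^(l x)) + \<kappa> \<le> (1/2)^(budget s)"
    and W0: "0 \<le> W" and Ww: "W \<le> q^s"
  shows "(\<Sum>x\<in>sig_set s. wt x * real (opt_len x)) + W * real (budget (Suc s))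
      \<le> (\<Sum>x\<in>sig_set s. wt x * real (l x)) + W * real m"
proof -
  define D where "D = budget s"
  define i where "i = lg s"
  define n where "n = Suc s"
  have sig_ne: "sig_set s \<noteq> {}" using card_sig_set[of s] by auto
  obtain l2 m2 where kr2: "(\<Sum>x\<in>sig_set s. (1/2::real)^(l2 x)) + (1/2)^m2 \<le> (1/2)^D"
    and cost2: "q^s * real (\<Sum>x\<in>sig_set s. l2 x) + W * real m2
      \<le> q^s * real (\<Sum>x\<in>sig_set s. l x) + W * real m"
    using round_tail_mass[OF finite_sig_set sig_ne kl ku kr[folded D_def] W0 Ww] by blast
  note rebase = kraft_rebase[OF finite_sig_set kr2]
  have card: "card (sig_set s) = 2^i + (Suc s - 2^i)"
    using lg_le[of s] by (simp add: card_sig_set i_def)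
  have lc: "q^s * (real n * (real i + 2) - 2^(i+1) + 1) + W * (real i + 1)
      \<le> q^s * real (\<Sum>x\<in>sig_set s. l2 x - D) + W * real (m2 - D)"
    using block_lower_bound[OF finite_sig_set card rebase(3) W0 Ww] by (simp add: card_sig_set n_def)
  have "(\<Sum>x\<in>sig_set s. l2 x) = (\<Sum>x\<in>sig_set s. D + (l2 x - D))"
    by (rule sum.cong) (simp_all add: rebase(1))
  then have "(\<Sum>x\<in>sig_set s. l2 x) = n * D + (\<Sum>x\<in>sig_set s. l2 x - D)"
    by (simp add: sum.distrib card_sig_set n_def)
  then have sum2: "real (\<Sum>x\<in>sig_set s. l2 x) = real n * real D + real (\<Sum>x\<in>sig_set s. l2 x - D)"
    by simp
  have m2: "real m2 = real D + real (m2 - D)" using rebase(2) by simp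
  have D1: "real (budget (Suc s)) = real D + real i + 1"
    using budget_Suc_head[OF ss] by (simp add: D_def i_def)
  have "(\<Sum>x\<in>sig_set s. wt x * real (opt_len x)) + W * real (budget (Suc s))
      = q^s * real n * real D + W * real D
        + (q^s * (real n * (real i + 2) - 2^(i+1) + 1) + W * (real i + 1))"
    unfolding head_block_cost[OF ss] D1 by (simp add: D_def i_def n_def algebra_simps)
  also have "\<dots> \<le> q^s * real n * real D + W * real D
        + (q^s * real (\<Sum>x\<in>sig_set s. l2 x - D) + W * real (m2 - D))"
    using lc by simp
  also have "\<dots> = q^s * real (\<Sum>x\<in>sig_set s. l2 x) + W * real m2"
    unfolding sum2 m2 by (simp add: algebra_simps)
  also have "\<dots> \<le> q^s * real (\<Sum>x\<in>sig_set s. l x) + W * real m" by (rule cost2)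
  also have "q^s * real (\<Sum>x\<in>sig_set s. l x) = (\<Sum>x\<in>sig_set s. wt x * real (l x))"
    by (simp add: sum_distrib_left sig_set_wt)
  finally show ?thesis .
qed

end

context tdgd
begin

text \<open>A competitor is split
  into its block s and its tail; the tail is shifted to start at the budget of s + 1, and the
  block is compared with head_block_bound.\<close>
lemma head_step:
  assumes ss: "s < s0"
    and IH: "\<And>l'. tail_kraft (Suc s) l' \<le> ennreal ((1/2)^(budget (Suc s)))
      \<Longrightarrow> tail_cost (Suc s) opt_len \<le> tail_cost (Suc s) l'"
    and kr: "tail_kraft s l \<le> ennreal ((1/2)^(budget s))"
  shows "tail_cost s opt_len \<le> tail_cost s l"
proof -
  define D1 where "D1 = budget (Suc s)"
  obtain \<kappa> m where \<kappa>: "tail_kraft (Suc s) l = ennreal \<kappa>" and kl: "(1/2)^(Suc m) < \<kappa>"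
    and ku: "\<kappa> \<le> (1/2)^m" and krs: "(\<Sum>x\<in>sig_set s. (1/2::real)^(l x)) + \<kappa> \<le> (1/2)^(budget s)"
    and lm: "\<And>x. x \<in> sig_from (Suc s) \<Longrightarrow> m \<le> l x"
    using tail_kraft_bracket[OF kr] by blast
  let ?l' = "\<lambda>x. l x - m + D1"
  have "0 < (1/2::real)^(Suc m)" by simp
  then have \<kappa>0: "0 \<le> \<kappa>" using kl by linarith
  have "tail_kraft (Suc s) ?l' \<le> ennreal ((1/2)^D1)"
    by (rule tail_shift_budget[OF lm \<kappa> \<kappa>0 ku])
  then have tail_opt: "tail_cost (Suc s) opt_len \<le> tail_cost (Suc s) ?l'"
    by (intro IH) (simp add: D1_def)
  obtain W where W: "tail_weight (Suc s) = ennreal W" "0 \<le> W" "W \<le> q^s"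
    using tail_weight_bound[OF ss] q_pos
    by (metis ennreal_cases ennreal_le_iff ennreal_neq_top neq_top_trans zero_le_power less_imp_le)
  have block: "(\<Sum>x\<in>sig_set s. wt x * real (opt_len x)) + W * real D1
      \<le> (\<Sum>x\<in>sig_set s. wt x * real (l x)) + W * real m"
    unfolding D1_def using head_block_bound[OF ss kl ku krs W(2,3)] .
  have nn_opt: "0 \<le> (\<Sum>x\<in>sig_set s. wt x * real (opt_len x))"
    and nn_l: "0 \<le> (\<Sum>x\<in>sig_set s. wt x * real (l x))"
    by (simp_all add: sum_nonneg wt_nonneg)
  have "tail_cost s opt_len + ennreal (real D1 * W)
      = ennreal ((\<Sum>x\<in>sig_set s. wt x * real (opt_len x)) + W * real D1) + tail_cost (Suc s) opt_len"
    using nn_opt W(2) by (simp add: tail_cost_split[of s opt_len] ennreal_plus mult.commute add_ac)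
  also have "\<dots> \<le> ennreal ((\<Sum>x\<in>sig_set s. wt x * real (l x)) + W * real m) + tail_cost (Suc s) ?l'"
    by (rule add_mono[OF ennreal_leI[OF block] tail_opt])
  also have "\<dots> = ennreal (\<Sum>x\<in>sig_set s. wt x * real (l x))
      + (tail_cost (Suc s) ?l' + ennreal (real m) * tail_weight (Suc s))"
    using nn_l W(1,2) by (simp add: ennreal_plus ennreal_mult mult.commute add_ac)
  also have "\<dots> = ennreal (\<Sum>x\<in>sig_set s. wt x * real (l x))
      + (tail_cost (Suc s) l + ennreal (real D1) * tail_weight (Suc s))"
    using tail_shift(2)[where t="Suc s" and l=l and m=m and d=D1, OF lm] by simp
  also have "\<dots> = tail_cost s l + ennreal (real D1 * W)"
    unfolding tail_cost_split[of s l] using W(1,2) by (simp add: ennreal_mult add_ac mult.commute)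
  finally show ?thesis by (simp add: ennreal_add_left_cancel_le add.commute[of "tail_cost s _"])
qed

theorem tail_cost_lower_bound:
  "s \<le> s0 \<Longrightarrow> tail_kraft s l \<le> ennreal ((1/2)^(budget s)) \<Longrightarrow> tail_cost s opt_len \<le> tail_cost s l"
proof (induction "s0 - s" arbitrary: s l)
  case 0
  then have "s = s0" by simp
  then show ?case using 0 tail_optimal by simp
next
  case (Suc d)
  then have ss: "s < s0" by simp
  show ?case
  proof (rule head_step[OF ss _ Suc.prems(2)])
    fix l' assume "tail_kraft (Suc s) l' \<le> ennreal ((1/2)^(budget (Suc s)))"
    then show "tail_cost (Suc s) opt_len \<le> tail_cost (Suc s) l'"
      using Suc.hyps(1)[of "Suc s"] Suc.hyps(2) ss by simp
  qed
qed

lemma exp_len_tail_cost: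
  "exp_len (TDGD q) c = ennreal ((1 - q)^2) * tail_cost 0 (\<lambda>x. length (c x))"
proof -
  have "ennreal (TDGD q x * real (length (c x)))
      = ennreal ((1 - q)^2) * (indicator (sig_from 0) x * ennreal (wt x * real (length (c x))))" for x
  proof -
    have eq: "TDGD q x * real (length (c x)) = (1 - q)^2 * (wt x * real (length (c x)))"
      by (simp add: TDGD_def wt_def)
    have "0 \<le> wt x * real (length (c x))" using wt_nonneg by simp
    then have "ennreal (TDGD q x * real (length (c x)))
        = ennreal ((1 - q)^2) * ennreal (wt x * real (length (c x)))"
      unfolding eq by (intro ennreal_mult) simp_all
    then show ?thesis by simp
  qed
  then show ?thesis
    unfolding exp_len_def tail_cost_def by (simp add: nn_integral_cmult)
qed

lemma opt_len_optimal:
  assumes pc: "prefix_code c" and len: "\<forall>x. length (c x) = opt_len x"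
  shows "optimal_prefix_code (TDGD (1 / 2^k)) c"
  unfolding optimal_prefix_code_def q_def[symmetric]
proof (intro conjI allI impI)
  show "prefix_code c" by (rule pc)
  fix c' assume pc': "prefix_code c'"
  have "tail_kraft 0 (\<lambda>x. length (c' x)) \<le> ennreal ((1/2)^(budget 0))"
    using kraft_nn_integral[OF pc'] budget_0 by (simp add: tail_kraft_def)
  then have "tail_cost 0 opt_len \<le> tail_cost 0 (\<lambda>x. length (c' x))"
    by (rule tail_cost_lower_bound[rotated]) simp
  moreover have "(\<lambda>x. length (c x)) = opt_len" using len by auto
  ultimately show "exp_len (TDGD q) c \<le> exp_len (TDGD q) c'"
    unfolding exp_len_tail_cost by (simp add: mult_left_mono)
qed

lemma cnt_opt_len:
  assumes len: "\<forall>x. length (c x) = opt_len x"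
  shows "cnt c s (Lam s) = n_short s" "cnt c s (Lam s + 1) = Suc s - n_short s"
    "\<forall>a b. a + b = s \<longrightarrow> length (c (a, b)) \<in> {Lam s, Lam s + 1}"
proof -
  have len_ab: "a + b = s \<Longrightarrow> length (c (a, b)) = Lam s + (if a < n_short s then 0 else 1)" for a b
    using len by (simp add: opt_len_def)
  have "{(a, b). a + b = s \<and> length (c (a, b)) = Lam s} = (\<lambda>a. (a, s - a)) ` {..<n_short s}"
    using n_short_le[of s] len_ab by (force simp: image_iff split: if_splits)
  then show "cnt c s (Lam s) = n_short s"
    unfolding cnt_def by (simp add: card_image[OF inj_sig_set])
  have "{(a, b). a + b = s \<and> length (c (a, b)) = Lam s + 1} = (\<lambda>a. (a, s - a)) ` {n_short s..s}"
    using len_ab by (force simp: image_iff split: if_splits)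
  then show "cnt c s (Lam s + 1) = Suc s - n_short s"
    unfolding cnt_def by (simp add: card_image[OF inj_sig_set])
  show "\<forall>a b. a + b = s \<longrightarrow> length (c (a, b)) \<in> {Lam s, Lam s + 1}"
    using len_ab by simp
qed

lemma head_match:
  assumes s: "s = 2^i + j - 1" and i: "i \<le> k - 2" and j: "j \<le> 2^i - 1"
  shows "Lam s = (s + 2) * (i + 1) - 2^(i+1)" "n_short s = 2^i - j - 1"
    "Suc s - n_short s = 2 * j + 1"
proof -
  have s1: "Suc s = 2^i + j" using s by (simp add: Suc_diff_le)
  have jl: "j < 2^i" using j by (metis One_nat_def Suc_pred le_imp_less_Suc zero_less_power
        zero_less_numeral)
  have lgi: "lg s = i" by (rule lg_eqI) (use s1 jl in simp_all)
  have "(2::nat)^(i+1) \<le> 2^(k-1)" using i k2 by (intro power_increasing) auto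
  then have ss: "s < s0" using s1 jl by (simp add: s0_def H_def)
  show "Lam s = (s + 2) * (i + 1) - 2^(i+1)" using Lam_head[OF ss] lgi by simp
  have A: "n_short s = 2 * 2^i - s - 2" using n_short_head[OF ss] lgi by simp
  show "n_short s = 2^i - j - 1" using A s1 by simp
  show "Suc s - n_short s = 2 * j + 1" using A s1 jl by simp
qed

lemma n_short_tail_closed:
  assumes s: "s = s0 + (KK - 1) * l + j" and jl: "j < KK - 1"
  shows "n_short s = (KK - 1) * (if j + 1 < H then 2 * l + 1 else 2 * l + 2) - Suc s
    - (if j + 2 = H \<or> j + 2 = KK then 1 else 0)"
proof -
  have "tail_l s = l" "tail_j s = j" using tail_decomp_unique[OF jl] s by simp_all
  moreover have "\<not> s < s0" using s by simp
  ultimately show ?thesis by (simp add: n_short_tail slack_def slack_up_def)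
qed

lemma tail_match:
  assumes s: "s = 2^(k-1) - 1 + (2^k - 1) * l + j" and j: "j \<le> 2^k - 2"
  shows "Lam s = (s + 2) * k - 2^k"
    "j + 3 \<le> 2^(k-1) \<Longrightarrow> n_short s = (2^k - 1) * l + 2^(k-1) - j - 1 \<and> Suc s - n_short s = 2 * j + 1"
    "j + 2 = 2^(k-1) \<Longrightarrow> n_short s = (2^k - 1) * l \<and> Suc s - n_short s = 2^k - 2"
    "2^(k-1) - 1 \<le> j \<and> j + 4 \<le> 2^k \<Longrightarrow> n_short s = (2^k - 1) * l + 3 * 2^(k-1) - 2 - j \<and> Suc s - n_short s = 2 * j + 2 - 2^k"
    "j + 3 = 2^k \<Longrightarrow> n_short s = (2^k - 1) * l + 2^(k-1) + 1 \<and> Suc s - n_short s = 2^k - 4"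
    "j + 2 = 2^k \<Longrightarrow> n_short s = (2^k - 1) * l + 2^(k-1) - 1 \<and> Suc s - n_short s = 2^k - 1"
proof -
  have HH: "2^(k-1) = H" and KKe: "2^k = KK" by (simp_all add: H_def KK_def)
  define M where "M = (KK - 1) * l"
  have "s = H - 1 + (KK - 1) * l + j" using s unfolding HH KKe .
  then have sd: "s = s0 + (KK - 1) * l + j" by (simp add: s0_def)
  have jl: "j < KK - 1" using j KK4 by (simp add: KKe)
  have s0H: "s0 + 1 = H" using H2 by (simp add: s0_def)
  have M1: "(KK - 1) * (2 * l + 1) = 2 * M + (KK - 1)"
    and M2: "(KK - 1) * (2 * l + 2) = 2 * M + 2 * (KK - 1)" by (simp_all add: M_def algebra_simps)
  note A = n_short_tail_closed[OF sd jl]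
  note base = sd[folded M_def] s0H KK_H H2 jl
  show "Lam s = (s + 2) * k - 2^k" using Lam_tail sd KKe by simp
  show "j + 3 \<le> 2^(k-1) \<Longrightarrow> n_short s = (2^k - 1) * l + 2^(k-1) - j - 1 \<and> Suc s - n_short s = 2 * j + 1"
  proof -
    assume "j + 3 \<le> 2^(k-1)"
    then have a: "j + 3 \<le> H" unfolding HH .
    then have "j + 1 < H" "\<not> (j + 2 = H \<or> j + 2 = KK)" using KK_H by auto
    then have "n_short s = 2 * M + (KK - 1) - Suc s" using A M1 by simp
    then show ?thesis unfolding HH KKe M_def[symmetric] using base a by arith
  qed
  show "j + 2 = 2^(k-1) \<Longrightarrow> n_short s = (2^k - 1) * l \<and> Suc s - n_short s = 2^k - 2"
  proof -
    assume "j + 2 = 2^(k-1)"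
    then have a: "j + 2 = H" unfolding HH .
    then have "j + 1 < H" using KK_H by auto
    then have "n_short s = 2 * M + (KK - 1) - Suc s - 1" using A M1 a by simp
    then show ?thesis unfolding HH KKe M_def[symmetric] using base a by arith
  qed
  show "2^(k-1) - 1 \<le> j \<and> j + 4 \<le> 2^k \<Longrightarrow> n_short s = (2^k - 1) * l + 3 * 2^(k-1) - 2 - j
      \<and> Suc s - n_short s = 2 * j + 2 - 2^k"
  proof -
    assume "2^(k-1) - 1 \<le> j \<and> j + 4 \<le> 2^k"
    then have a: "H - 1 \<le> j" "j + 4 \<le> KK" unfolding HH KKe by simp_all
    then have "\<not> j + 1 < H" "\<not> (j + 2 = H \<or> j + 2 = KK)" using H2 by auto
    then have "n_short s = 2 * M + 2 * (KK - 1) - Suc s" using A M2 by simp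
    then show ?thesis unfolding HH KKe M_def[symmetric] using base a by arith
  qed
  show "j + 3 = 2^k \<Longrightarrow> n_short s = (2^k - 1) * l + 2^(k-1) + 1 \<and> Suc s - n_short s = 2^k - 4"
  proof -
    assume "j + 3 = 2^k"
    then have a: "j + 3 = KK" unfolding KKe .
    then have "\<not> j + 1 < H" "\<not> (j + 2 = H \<or> j + 2 = KK)" using KK_H H2 by auto
    then have "n_short s = 2 * M + 2 * (KK - 1) - Suc s" using A M2 by simp
    then show ?thesis unfolding HH KKe M_def[symmetric] using base a by arith
  qed
  show "j + 2 = 2^k \<Longrightarrow> n_short s = (2^k - 1) * l + 2^(k-1) - 1 \<and> Suc s - n_short s = 2^k - 1"
  proof -
    assume "j + 2 = 2^k"
    then have a: "j + 2 = KK" unfolding KKe .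
    then have "\<not> j + 1 < H" using KK_H H2 by auto
    then have "n_short s = 2 * M + 2 * (KK - 1) - Suc s - 1" using A M2 a by simp
    then show ?thesis unfolding HH KKe M_def[symmetric] using base a by arith
  qed
qed

end

context tdgd
begin

lemma head_counts:
  assumes len: "\<forall>x. length (c x) = opt_len x"
  shows "\<forall>s i j. s = 2^i + j - 1 \<and> i \<le> k - 2 \<and> j \<le> 2^i - 1 \<longrightarrow>
       (let \<Lambda> = (s + 2) * (i + 1) - 2^(i+1) in
         (\<forall>a b. a + b = s \<longrightarrow> length (c (a, b)) \<in> {\<Lambda>, \<Lambda> + 1}) \<and>
         cnt c s \<Lambda> = 2^i - j - 1 \<and> cnt c s (\<Lambda> + 1) = 2 * j + 1)"
proof (intro allI impI)
  fix s i j :: nat assume "s = 2^i + j - 1 \<and> i \<le> k - 2 \<and> j \<le> 2^i - 1"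
  then have m: "Lam s = (s + 2) * (i + 1) - 2^(i+1)" "n_short s = 2^i - j - 1"
    "Suc s - n_short s = 2 * j + 1"
    using head_match[of s i j] by auto
  show "let \<Lambda> = (s + 2) * (i + 1) - 2^(i+1) in
      (\<forall>a b. a + b = s \<longrightarrow> length (c (a, b)) \<in> {\<Lambda>, \<Lambda> + 1}) \<and>
      cnt c s \<Lambda> = 2^i - j - 1 \<and> cnt c s (\<Lambda> + 1) = 2 * j + 1"
    unfolding Let_def m(1)[symmetric] using cnt_opt_len[OF len, of s] m(2,3) by simp
qed

lemma tail_counts:
  assumes len: "\<forall>x. length (c x) = opt_len x"
  shows "\<forall>s l j. s = 2^(k-1) - 1 + (2^k - 1) * l + j \<and> j \<le> 2^k - 2 \<longrightarrow>
       (let \<Lambda> = (s + 2) * k - 2^k in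
         (\<forall>a b. a + b = s \<longrightarrow> length (c (a, b)) \<in> {\<Lambda>, \<Lambda> + 1}) \<and>
         (j + 3 \<le> 2^(k-1) \<longrightarrow>
            cnt c s \<Lambda> = (2^k - 1) * l + 2^(k-1) - j - 1 \<and> cnt c s (\<Lambda> + 1) = 2 * j + 1) \<and>
         (j + 2 = 2^(k-1) \<longrightarrow>
            cnt c s \<Lambda> = (2^k - 1) * l \<and> cnt c s (\<Lambda> + 1) = 2^k - 2) \<and>
         (2^(k-1) - 1 \<le> j \<and> j + 4 \<le> 2^k \<longrightarrow>
            cnt c s \<Lambda> = (2^k - 1) * l + 3 * 2^(k-1) - 2 - j \<and> cnt c s (\<Lambda> + 1) = 2 * j + 2 - 2^k) \<and>
         (j + 3 = 2^k \<longrightarrow>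
            cnt c s \<Lambda> = (2^k - 1) * l + 2^(k-1) + 1 \<and> cnt c s (\<Lambda> + 1) = 2^k - 4) \<and>
         (j + 2 = 2^k \<longrightarrow>
            cnt c s \<Lambda> = (2^k - 1) * l + 2^(k-1) - 1 \<and> cnt c s (\<Lambda> + 1) = 2^k - 1))"
proof (intro allI impI)
  fix s l j :: nat assume "s = 2^(k-1) - 1 + (2^k - 1) * l + j \<and> j \<le> 2^k - 2"
  then have s: "s = 2^(k-1) - 1 + (2^k - 1) * l + j" and j: "j \<le> 2^k - 2" by simp_all
  note m = tail_match[OF s j]
  note counts = cnt_opt_len[OF len, of s]
  show "let \<Lambda> = (s + 2) * k - 2^k in
      (\<forall>a b. a + b = s \<longrightarrow> length (c (a, b)) \<in> {\<Lambda>, \<Lambda> + 1}) \<and>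
      (j + 3 \<le> 2^(k-1) \<longrightarrow>
         cnt c s \<Lambda> = (2^k - 1) * l + 2^(k-1) - j - 1 \<and> cnt c s (\<Lambda> + 1) = 2 * j + 1) \<and>
      (j + 2 = 2^(k-1) \<longrightarrow>
         cnt c s \<Lambda> = (2^k - 1) * l \<and> cnt c s (\<Lambda> + 1) = 2^k - 2) \<and>
      (2^(k-1) - 1 \<le> j \<and> j + 4 \<le> 2^k \<longrightarrow>
         cnt c s \<Lambda> = (2^k - 1) * l + 3 * 2^(k-1) - 2 - j \<and> cnt c s (\<Lambda> + 1) = 2 * j + 2 - 2^k) \<and>
      (j + 3 = 2^k \<longrightarrow>
         cnt c s \<Lambda> = (2^k - 1) * l + 2^(k-1) + 1 \<and> cnt c s (\<Lambda> + 1) = 2^k - 4) \<and>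
      (j + 2 = 2^k \<longrightarrow>
         cnt c s \<Lambda> = (2^k - 1) * l + 2^(k-1) - 1 \<and> cnt c s (\<Lambda> + 1) = 2^k - 1)"
    unfolding Let_def m(1)[symmetric] counts(1,2) using counts(3) m(2-6) by auto
qed

end

theorem mainTheorem14:
  fixes k :: nat and q :: real
  assumes "k \<ge> 2" and "q = 1 / 2 ^ k"
  shows "\<exists>c. optimal_prefix_code (TDGD q) c \<and>
    (\<forall>s i j. s = 2^i + j - 1 \<and> i \<le> k - 2 \<and> j \<le> 2^i - 1 \<longrightarrow>
       (let \<Lambda> = (s + 2) * (i + 1) - 2^(i+1) in
         (\<forall>a b. a + b = s \<longrightarrow> length (c (a, b)) \<in> {\<Lambda>, \<Lambda> + 1}) \<and>
         cnt c s \<Lambda> = 2^i - j - 1 \<and> cnt c s (\<Lambda> + 1) = 2 * j + 1)) \<and>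
    (\<forall>s l j. s = 2^(k-1) - 1 + (2^k - 1) * l + j \<and> j \<le> 2^k - 2 \<longrightarrow>
       (let \<Lambda> = (s + 2) * k - 2^k in
         (\<forall>a b. a + b = s \<longrightarrow> length (c (a, b)) \<in> {\<Lambda>, \<Lambda> + 1}) \<and>
         (j + 3 \<le> 2^(k-1) \<longrightarrow>
            cnt c s \<Lambda> = (2^k - 1) * l + 2^(k-1) - j - 1 \<and> cnt c s (\<Lambda> + 1) = 2 * j + 1) \<and>
         (j + 2 = 2^(k-1) \<longrightarrow>
            cnt c s \<Lambda> = (2^k - 1) * l \<and> cnt c s (\<Lambda> + 1) = 2^k - 2) \<and>
         (2^(k-1) - 1 \<le> j \<and> j + 4 \<le> 2^k \<longrightarrow>
            cnt c s \<Lambda> = (2^k - 1) * l + 3 * 2^(k-1) - 2 - j \<and> cnt c s (\<Lambda> + 1) = 2 * j + 2 - 2^k) \<and>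
         (j + 3 = 2^k \<longrightarrow>
            cnt c s \<Lambda> = (2^k - 1) * l + 2^(k-1) + 1 \<and> cnt c s (\<Lambda> + 1) = 2^k - 4) \<and>
         (j + 2 = 2^k \<longrightarrow>
            cnt c s \<Lambda> = (2^k - 1) * l + 2^(k-1) - 1 \<and> cnt c s (\<Lambda> + 1) = 2^k - 1)))"
proof -
  interpret tdgd k using assms(1) by unfold_locales
  obtain c where pc: "prefix_code c" and len: "\<forall>x. length (c x) = opt_len x"
    using opt_len_code by blast
  have "optimal_prefix_code (TDGD q) c" unfolding assms(2) by (rule opt_len_optimal[OF pc len])
  then show ?thesis using head_counts[OF len] tail_counts[OF len] by blast
qed

end
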